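(* Let $\Gamma$ be a Dynkin diagram of finite type, $\mathfrak{g}_\Gamma$ the corresponding finite-dimensional semisimple Lie algebra, and $S\subsetneq\Gamma$ a proper subdiagram. Let $\mathfrak{g}_S$ be the subalgebra generated by $\{e_\alpha,f_\alpha:\alpha\in S\}$ and $\mathfrak{p}_S$ the subalgebra generated by $\{e_\alpha:\alpha\in\Gamma\}\cup\{f_\alpha:\alpha\in S\}$. Then the relative Lie algebra cohomology $H^{>0}(\mathfrak{p}_S,\mathfrak{g}_S;\mathbb{C})$ with trivial coefficients is nonzero.
   Context: Vertices of $\Gamma$ index the simple roots $\alpha$ of $\mathfrak{g}_\Gamma$, and $\{e_\alpha,h_\alpha,f_\alpha\}$ is the $\mathfrak{sl}_2$-triple of the simple root $\alpha$. $H^{>0}$ denotes the direct sum of the cohomology groups in positive degrees. *)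

theory Defs
  imports Complex_Main
begin

text \<open>A Dynkin diagram with vertex set the finite type 'i is encoded by its Cartan matrix
  A i j = alpha_j(h_i).\<close>

definition finite_type_cartan :: "('i::finite \<Rightarrow> 'i \<Rightarrow> int) \<Rightarrow> bool" where
  "finite_type_cartan A \<longleftrightarrow>
     (\<forall>i. A i i = 2) \<and>
     (\<forall>i j. i \<noteq> j \<longrightarrow> A i j \<le> 0) \<and>
     (\<forall>i j. A i j = 0 \<longleftrightarrow> A j i = 0) \<and>
     (\<exists>d :: 'i \<Rightarrow> real. (\<forall>i. d i > 0) \<and>
        (\<forall>i j. d i * of_int (A i j) = d j * of_int (A j i)) \<and>
        (\<forall>x :: 'i \<Rightarrow> real. x \<noteq> (\<lambda>_. 0) \<longrightarrow>
            (\<Sum>i\<in>UNIV. \<Sum>j\<in>UNIV. x i * d i * of_int (A i j) * x j) > 0))"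

definition lie_algebra :: "(complex \<Rightarrow> 'a::ab_group_add \<Rightarrow> 'a) \<Rightarrow> ('a \<Rightarrow> 'a \<Rightarrow> 'a) \<Rightarrow> bool" where
  "lie_algebra sc br \<longleftrightarrow>
     vector_space sc \<and>
     (\<forall>x y z. br (x + y) z = br x z + br y z \<and> br x (y + z) = br x y + br x z) \<and>
     (\<forall>a x y. br (sc a x) y = sc a (br x y) \<and> br x (sc a y) = sc a (br x y)) \<and>
     (\<forall>x. br x x = 0) \<and>
     (\<forall>x y z. br x (br y z) + br y (br z x) + br z (br x y) = 0)"

inductive_set lie_gen :: "(complex \<Rightarrow> 'a::ab_group_add \<Rightarrow> 'a) \<Rightarrow> ('a \<Rightarrow> 'a \<Rightarrow> 'a) \<Rightarrow> 'a set \<Rightarrow> 'a set"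
  for sc br X where
  gen: "x \<in> X \<Longrightarrow> x \<in> lie_gen sc br X"
| zero: "0 \<in> lie_gen sc br X"
| add: "x \<in> lie_gen sc br X \<Longrightarrow> y \<in> lie_gen sc br X \<Longrightarrow> x + y \<in> lie_gen sc br X"
| smult: "x \<in> lie_gen sc br X \<Longrightarrow> sc a x \<in> lie_gen sc br X"
| bracket: "x \<in> lie_gen sc br X \<Longrightarrow> y \<in> lie_gen sc br X \<Longrightarrow> br x y \<in> lie_gen sc br X"

text \<open>(L, sc, br) is the semisimple Lie algebra g_A with Chevalley generators e, f, h:
  Serre presentation, generated by the generators, h linearly independent (this rules out
  proper quotients of g_A, so by Serre's theorem L is isomorphic to g_A), finite-dimensional.\<close>
definition chevalley_realization ::
  "('i::finite \<Rightarrow> 'i \<Rightarrow> int) \<Rightarrow> (complex \<Rightarrow> 'a::ab_group_add \<Rightarrow> 'a) \<Rightarrow> ('a \<Rightarrow> 'a \<Rightarrow> 'a)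
    \<Rightarrow> ('i \<Rightarrow> 'a) \<Rightarrow> ('i \<Rightarrow> 'a) \<Rightarrow> ('i \<Rightarrow> 'a) \<Rightarrow> bool" where
  "chevalley_realization A sc br e f h \<longleftrightarrow>
     lie_algebra sc br \<and>
     (\<exists>B. finite B \<and> module.span sc B = UNIV) \<and>
     inj h \<and> \<not> module.dependent sc (range h) \<and>
     (\<forall>i j. br (h i) (h j) = 0) \<and>
     (\<forall>i j. br (h i) (e j) = sc (of_int (A i j)) (e j)) \<and>
     (\<forall>i j. br (h i) (f j) = sc (of_int (- A i j)) (f j)) \<and>
     (\<forall>i. br (e i) (f i) = h i) \<and>
     (\<forall>i j. i \<noteq> j \<longrightarrow> br (e i) (f j) = 0) \<and>
     (\<forall>i j. i \<noteq> j \<longrightarrow> (br (e i) ^^ nat (1 - A i j)) (e j) = 0) \<and>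
     (\<forall>i j. i \<noteq> j \<longrightarrow> (br (f i) ^^ nat (1 - A i j)) (f j) = 0) \<and>
     lie_gen sc br (range e \<union> range f \<union> range h) = UNIV"

text \<open>n-cochains are functions on lists; only their values on lists of length n with
  entries in P matter.\<close>

definition plists :: "'a set \<Rightarrow> nat \<Rightarrow> 'a list set" where
  "plists P n = {xs. length xs = n \<and> set xs \<subseteq> P}"

definition rel_cochain ::
  "(complex \<Rightarrow> 'a::ab_group_add \<Rightarrow> 'a) \<Rightarrow> ('a \<Rightarrow> 'a \<Rightarrow> 'a) \<Rightarrow> 'a set \<Rightarrow> 'a set \<Rightarrow> nat
     \<Rightarrow> ('a list \<Rightarrow> complex) \<Rightarrow> bool" where
  "rel_cochain sc br P K n c \<longleftrightarrow>
     \<comment> \<open>multilinear\<close>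
     (\<forall>xs\<in>plists P n. \<forall>i<n. \<forall>u\<in>P. \<forall>v\<in>P. \<forall>a.
        c (xs[i := sc a u + v]) = a * c (xs[i := u]) + c (xs[i := v])) \<and>
     \<comment> \<open>alternating\<close>
     (\<forall>xs\<in>plists P n. \<forall>i j. i < j \<and> j < n \<and> xs ! i = xs ! j \<longrightarrow> c xs = 0) \<and>
     \<comment> \<open>vanishes on K (descends to P/K)\<close>
     (\<forall>xs\<in>plists P n. (\<exists>i<n. xs ! i \<in> K) \<longrightarrow> c xs = 0) \<and>
     \<comment> \<open>K-invariant\<close>
     (\<forall>xs\<in>plists P n. \<forall>y\<in>K. (\<Sum>i<n. c (xs[i := br y (xs ! i)])) = 0)"

definition del2 :: "nat \<Rightarrow> nat \<Rightarrow> 'a list \<Rightarrow> 'a list" where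
  "del2 i j xs = map (\<lambda>k. xs ! k) (filter (\<lambda>k. k \<noteq> i \<and> k \<noteq> j) [0..<length xs])"

definition ce_diff :: "('a \<Rightarrow> 'a \<Rightarrow> 'a) \<Rightarrow> nat \<Rightarrow> ('a list \<Rightarrow> complex) \<Rightarrow> 'a list \<Rightarrow> complex" where
  "ce_diff br n c xs =
     (\<Sum>i<Suc n. \<Sum>j\<in>{i<..<Suc n}.
        (-1) ^ (i + j) * c (br (xs ! i) (xs ! j) # del2 i j xs))"

definition rel_cohom_nonzero ::
  "(complex \<Rightarrow> 'a::ab_group_add \<Rightarrow> 'a) \<Rightarrow> ('a \<Rightarrow> 'a \<Rightarrow> 'a) \<Rightarrow> 'a set \<Rightarrow> 'a set \<Rightarrow> nat \<Rightarrow> bool" where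
  "rel_cohom_nonzero sc br P K n \<longleftrightarrow>
     (\<exists>c. rel_cochain sc br P K n c \<and>
          (\<forall>xs\<in>plists P (Suc n). ce_diff br n c xs = 0) \<and>
          \<not> (\<exists>b m. n = Suc m \<and> rel_cochain sc br P K m b \<and>
                 (\<forall>xs\<in>plists P n. ce_diff br m b xs = c xs)))"

end

theory Submission
  imports Defs "Jordan_Normal_Form.Determinant"
begin

text \<open>
  Pick H in the Cartan subalgebra with alpha(H) = 0 for the simple roots alpha in S and
  alpha(H) = 1 for the others; this is possible because a finite-type Cartan matrix is
  nondegenerate. Then ad H kills g_S, and p_S = g_S + u is a direct sum, where u is spanned
  by the ad H-eigenvectors in p_S of positive integer eigenvalue; u is nonzero as S is proper.

  Let N = dim u and let w be the determinant of the u-coordinates, a volume form on p_S/g_S.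
  It is g_S-invariant because g_S = [g_S, g_S] acts on u by traceless maps, and it is a
  cocycle because a relative cochain of degree N + 1 vanishes. It is not a coboundary: w is 1
  on a basis of eigenvectors u_1, ..., u_N of u, while each term of d b on this basis evaluates
  b at a bracket [u_i, u_j] followed by the remaining u_k. The eigenvalue of [u_i, u_j] is the
  sum of those of u_i and u_j, so each basis vector occurring in it is some u_k with k
  different from i and j, and b vanishes because an entry is repeated.
\<close>

definition del1 :: "nat \<Rightarrow> 'a list \<Rightarrow> 'a list" where
  "del1 k xs = take k xs @ drop (Suc k) xs"

lemma length_del1[simp]: "k < length xs \<Longrightarrow> length (del1 k xs) = length xs - 1"
  unfolding del1_def by auto

lemma set_del1: "set (del1 k xs) \<subseteq> set xs"
  unfolding del1_def by (auto dest: in_set_takeD in_set_dropD)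

lemma del1_map: "del1 k (map g xs) = map g (del1 k xs)"
  unfolding del1_def by (simp add: drop_map take_map)

lemma in_set_del1_nth:
  assumes "v \<in> set (del1 p xs)"
  obtains q where "q < length xs" "q \<noteq> p" "xs ! q = v"
proof -
  from assms consider "v \<in> set (take p xs)" | "v \<in> set (drop (Suc p) xs)" unfolding del1_def by auto
  then show ?thesis
  proof cases
    case 1
    then show ?thesis using that by (auto simp: in_set_conv_nth)
  next
    case 2
    then obtain i where "i < length xs - Suc p" "xs ! (Suc p + i) = v" by (auto simp: in_set_conv_nth)
    then show ?thesis using that[of "Suc p + i"] by auto
  qed
qed

lemma del1_Cons_Suc: "del1 (Suc k) (w # zs) = w # del1 k zs"
  unfolding del1_def by simp

lemma plists_iff: "xs \<in> plists Q n \<longleftrightarrow> length xs = n \<and> (\<forall>i<n. xs ! i \<in> Q)"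
  unfolding plists_def by (auto simp: set_conv_nth)

lemma plists_update: "xs \<in> plists Q n \<Longrightarrow> w \<in> Q \<Longrightarrow> xs[k:=w] \<in> plists Q n"
  unfolding plists_def by (auto dest: set_update_subset_insert[THEN subsetD])

lemma plists_nth: "xs \<in> plists Q n \<Longrightarrow> i < n \<Longrightarrow> xs ! i \<in> Q"
  unfolding plists_iff by auto

lemma plists_del1: "xs \<in> plists Q (Suc n) \<Longrightarrow> k < Suc n \<Longrightarrow> del1 k xs \<in> plists Q n"
  unfolding plists_def using set_del1 by fastforce

lemma plists_Cons: "w # xs \<in> plists Q (Suc n) \<longleftrightarrow> w \<in> Q \<and> xs \<in> plists Q n"
  unfolding plists_def by auto

lemma del1_Suc_swap:
  assumes "Suc k < length xs"
  shows "del1 k (xs[Suc k := xs ! k]) = del1 (Suc k) xs"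
proof -
  have "drop (Suc k) (xs[Suc k := xs ! k]) = xs ! k # drop (Suc (Suc k)) xs"
    using assms by (metis Cons_nth_drop_Suc drop_update_cancel length_list_update lessI nth_list_update_eq)
  moreover have "take (Suc k) xs = take k xs @ [xs ! k]"
    using assms by (simp add: take_Suc_conv_app_nth)
  ultimately show ?thesis unfolding del1_def by simp
qed

lemma upt_split: "q < n \<Longrightarrow> [0..<n] = [0..<q] @ q # [Suc q..<n]"
  by (metis upt_add_eq_append upt_conv_Cons zero_le le_add_diff_inverse less_imp_le_nat)

lemma filter_upt_split:
  assumes "P q" "q < n"
  shows "filter P [0..<n] = filter P [0..<q] @ q # filter P [Suc q..<n]"
  using upt_split[OF assms(2)] assms(1) by simp

lemma filter_upt_del1:
  assumes "P q" "q < n"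
  shows "del1 (length (filter P [0..<q])) (filter P [0..<n]) = filter (\<lambda>k. P k \<and> k \<noteq> q) [0..<n]"
    and "filter P [0..<n] ! length (filter P [0..<q]) = q"
proof -
  have s: "filter P [0..<n] = filter P [0..<q] @ q # filter P [Suc q..<n]"
    by (rule filter_upt_split[of P q n, OF assms])
  from upt_split[OF assms(2)] have "filter (\<lambda>k. P k \<and> k \<noteq> q) [0..<n] =
     filter (\<lambda>k. P k \<and> k \<noteq> q) [0..<q] @ filter (\<lambda>k. P k \<and> k \<noteq> q) [Suc q..<n]" by simp
  also have "filter (\<lambda>k. P k \<and> k \<noteq> q) [0..<q] = filter P [0..<q]"
    by (rule filter_cong) auto
  also have "filter (\<lambda>k. P k \<and> k \<noteq> q) [Suc q..<n] = filter P [Suc q..<n]"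
    by (rule filter_cong) auto
  finally show "del1 (length (filter P [0..<q])) (filter P [0..<n]) = filter (\<lambda>k. P k \<and> k \<noteq> q) [0..<n]"
    unfolding s del1_def by simp
  show "filter P [0..<n] ! length (filter P [0..<q]) = q" unfolding s by simp
qed

lemma length_filter_upt_neq2:
  assumes "i \<noteq> j"
  shows "length (filter (\<lambda>k. k \<noteq> i \<and> k \<noteq> j) [0..<q]) + (if i < q then 1 else 0) + (if j < q then 1 else 0) = q"
  using assms by (induction q) auto

lemma length_filter_upt_neq:
  shows "length (filter (\<lambda>k. k \<noteq> i) [0..<q]) + (if i < q then 1 else 0) = q"
  by (induction q) auto

lemma del2_commute: "del2 i j xs = del2 j i xs"
  unfolding del2_def by (metis (no_types, lifting) filter_cong)

lemma length_del2: "i < length xs \<Longrightarrow> j < length xs \<Longrightarrow> i \<noteq> j \<Longrightarrow> length (del2 i j xs) = length xs - 2"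
proof -
  assume a: "i < length xs" "j < length xs" "i \<noteq> j"
  have "length (filter (\<lambda>k. k \<noteq> i \<and> k \<noteq> j) [0..<length xs]) + 1 + 1 = length xs"
    using length_filter_upt_neq2[OF a(3), of "length xs"] a by simp
  then show ?thesis unfolding del2_def by simp
qed

lemma set_del2: "set (del2 i j xs) \<subseteq> set xs"
  unfolding del2_def by auto

lemma del2_update_deleted: "p = i \<or> p = j \<Longrightarrow> del2 i j (xs[p:=w]) = del2 i j xs"
  unfolding del2_def by (auto intro!: map_cong)

lemma del2_split:
  assumes "q \<noteq> i" "q \<noteq> j" "q < length xs"
  shows "del2 i j xs = map (nth xs) (filter (\<lambda>k. k \<noteq> i \<and> k \<noteq> j) [0..<q]) @ xs ! q #
     map (nth xs) (filter (\<lambda>k. k \<noteq> i \<and> k \<noteq> j) [Suc q..<length xs])"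
  unfolding del2_def using filter_upt_split[of "\<lambda>k. k \<noteq> i \<and> k \<noteq> j" q "length xs"] assms by simp

lemma nth_del2_index:
  assumes "q \<noteq> i" "q \<noteq> j" "q < length xs"
  shows "del2 i j xs ! length (filter (\<lambda>k. k \<noteq> i \<and> k \<noteq> j) [0..<q]) = xs ! q"
  using del2_split[OF assms] by (simp add: nth_append)

lemma del2_update_kept:
  assumes "p \<noteq> i" "p \<noteq> j" "p < length xs"
  shows "del2 i j (xs[p:=w]) = (del2 i j xs)[length (filter (\<lambda>k. k \<noteq> i \<and> k \<noteq> j) [0..<p]) := w]"
proof -
  have a: "p < length (xs[p:=w])" using assms by simp
  have "del2 i j (xs[p:=w]) = map (nth (xs[p:=w])) (filter (\<lambda>k. k \<noteq> i \<and> k \<noteq> j) [0..<p]) @ w #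
     map (nth (xs[p:=w])) (filter (\<lambda>k. k \<noteq> i \<and> k \<noteq> j) [Suc p..<length xs])"
    using del2_split[OF assms(1,2) a] assms by simp
  also have "map (nth (xs[p:=w])) (filter (\<lambda>k. k \<noteq> i \<and> k \<noteq> j) [0..<p]) =
             map (nth xs) (filter (\<lambda>k. k \<noteq> i \<and> k \<noteq> j) [0..<p])"
    by (rule map_cong) auto
  also have "map (nth (xs[p:=w])) (filter (\<lambda>k. k \<noteq> i \<and> k \<noteq> j) [Suc p..<length xs]) =
             map (nth xs) (filter (\<lambda>k. k \<noteq> i \<and> k \<noteq> j) [Suc p..<length xs])"
    by (rule map_cong) auto
  finally show ?thesis
    using del2_split[OF assms] by (simp add: list_update_append)
qed

lemma del1_del2:
  assumes "w0 \<noteq> r" "w0 \<noteq> m" "w0 < length xs"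
  shows "del1 (length (filter (\<lambda>k. k \<noteq> r \<and> k \<noteq> m) [0..<w0])) (del2 r m xs) =
         map (nth xs) (filter (\<lambda>k. k \<noteq> r \<and> k \<noteq> m \<and> k \<noteq> w0) [0..<length xs])"
  using filter_upt_del1(1)[of "\<lambda>k. k \<noteq> r \<and> k \<noteq> m" w0 "length xs"] assms
  unfolding del2_def del1_map by (simp add: conj_assoc)

lemma del1_as_map:
  assumes "p < length xs"
  shows "del1 p xs = map (nth xs) (filter (\<lambda>k. k \<noteq> p) [0..<length xs])"
proof -
  have "del1 (length (filter (\<lambda>k. True) [0..<p])) (filter (\<lambda>k. True) [0..<length xs]) =
      filter (\<lambda>k. True \<and> k \<noteq> p) [0..<length xs]"
    by (rule filter_upt_del1(1)) (use assms in auto)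
  then have "del1 p [0..<length xs] = filter (\<lambda>k. k \<noteq> p) [0..<length xs]" by simp
  then have "map (nth xs) (del1 p [0..<length xs]) = map (nth xs) (filter (\<lambda>k. k \<noteq> p) [0..<length xs])"
    by simp
  then show ?thesis by (simp add: del1_map[symmetric] map_nth)
qed

lemma del2_as_del1:
  assumes "p \<noteq> m" "p < length xs" "m < length xs"
  shows "del2 p m xs = del1 (length (filter (\<lambda>k. k \<noteq> p) [0..<m])) (del1 p xs)"
    and "del1 p xs ! length (filter (\<lambda>k. k \<noteq> p) [0..<m]) = xs ! m"
proof -
  have e: "del1 (length (filter (\<lambda>k. k \<noteq> p) [0..<m])) (filter (\<lambda>k. k \<noteq> p) [0..<length xs]) =
        filter (\<lambda>k. k \<noteq> p \<and> k \<noteq> m) [0..<length xs]"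
    by (rule filter_upt_del1(1)) (use assms in auto)
  show "del2 p m xs = del1 (length (filter (\<lambda>k. k \<noteq> p) [0..<m])) (del1 p xs)"
    unfolding del1_as_map[OF assms(2)] del1_map e del2_def ..
  have "filter (\<lambda>k. k \<noteq> p) [0..<length xs] ! length (filter (\<lambda>k. k \<noteq> p) [0..<m]) = m"
    by (rule filter_upt_del1(2)) (use assms in auto)
  moreover have "length (filter (\<lambda>k. k \<noteq> p) [0..<m]) < length (filter (\<lambda>k. k \<noteq> p) [0..<length xs])"
    using filter_upt_split[of "\<lambda>k. k \<noteq> p" m "length xs"] assms by simp
  ultimately show "del1 p xs ! length (filter (\<lambda>k. k \<noteq> p) [0..<m]) = xs ! m"
    unfolding del1_as_map[OF assms(2)] by simp
qed

lemma length_filter_mono: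
  assumes "p < q" "P p"
  shows "length (filter P [0..<p]) < length (filter P [0..<q])"
proof -
  have "[0..<q] = [0..<p] @ [p..<q]" using upt_add_eq_append[of 0 p "q - p"] assms by simp
  moreover have "[p..<q] = p # [Suc p..<q]" using assms upt_conv_Cons by auto
  ultimately show ?thesis using assms by simp
qed

lemma sum_skip_index:
  assumes p: "p < Suc N"
  shows "(\<Sum>m\<in>{..<Suc N} - {p}. F (length (filter (\<lambda>k. k \<noteq> p) [0..<m]))) = (\<Sum>k<N. F k)"
proof -
  define pos where "pos m = length (filter (\<lambda>k. k \<noteq> p) [0..<m])" for m
  have pos: "pos m + (if p < m then 1 else 0) = m" for m
    unfolding pos_def by (rule length_filter_upt_neq)
  have "(\<Sum>m\<in>{..<Suc N} - {p}. F (pos m)) = (\<Sum>k<N. F k)"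
  proof (rule sum.reindex_bij_witness[of _ "\<lambda>k. if k < p then k else Suc k" pos])
    fix m assume "m \<in> {..<Suc N} - {p}"
    then show "(if pos m < p then pos m else Suc (pos m)) = m" "pos m \<in> {..<N}"
      using pos[of m] p by (auto split: if_splits)
  next
    fix k assume "k \<in> {..<N}"
    then show "pos (if k < p then k else Suc k) = k" "(if k < p then k else Suc k) \<in> {..<Suc N} - {p}"
      by (cases "k < p"; use pos[of k] pos[of "Suc k"] p in \<open>auto split: if_splits\<close>)+
  qed simp
  then show ?thesis unfolding pos_def .
qed

lemma index_in_del2_less:
  assumes "q \<noteq> i" "q \<noteq> j" "q < length xs"
  shows "length (filter (\<lambda>k. k \<noteq> i \<and> k \<noteq> j) [0..<q]) < length (del2 i j xs)"
  using del2_split[OF assms] by simp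

lemma plists_del2: "xs \<in> plists Q (Suc (Suc m)) \<Longrightarrow> i < Suc (Suc m) \<Longrightarrow> j < Suc (Suc m) \<Longrightarrow> i \<noteq> j
   \<Longrightarrow> del2 i j xs \<in> plists Q m"
  using length_del2[of i xs j] set_del2[of i j xs] unfolding plists_def by auto

section \<open>Alternating multilinear forms\<close>

locale alternating_forms = vector_space scale for scale :: "'a::field \<Rightarrow> 'b::ab_group_add \<Rightarrow> 'b"
begin

definition linear_slot :: "'b set \<Rightarrow> nat \<Rightarrow> ('b list \<Rightarrow> 'a) \<Rightarrow> nat \<Rightarrow> bool" where
  "linear_slot Q n f k \<longleftrightarrow> (\<forall>xs\<in>plists Q n. \<forall>u\<in>Q. \<forall>v\<in>Q. \<forall>a.
      f (xs[k := scale a u + v]) = a * f (xs[k:=u]) + f (xs[k:=v]))"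

definition alternating :: "'b set \<Rightarrow> nat \<Rightarrow> ('b list \<Rightarrow> 'a) \<Rightarrow> bool" where
  "alternating Q n f \<longleftrightarrow> (\<forall>xs\<in>plists Q n. \<forall>i j. i<j \<and> j<n \<and> xs!i = xs!j \<longrightarrow> f xs = 0)"

lemma linear_slotD: "linear_slot Q n f k \<Longrightarrow> xs\<in>plists Q n \<Longrightarrow> u\<in>Q \<Longrightarrow> v\<in>Q \<Longrightarrow>
      f (xs[k := scale a u + v]) = a * f (xs[k:=u]) + f (xs[k:=v])"
  unfolding linear_slot_def by blast

lemma alternatingD: "alternating Q n f \<Longrightarrow> xs\<in>plists Q n \<Longrightarrow> i < j \<Longrightarrow> j < n \<Longrightarrow> xs!i = xs!j \<Longrightarrow> f xs = 0"
  unfolding alternating_def by blast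

lemma alternating_eq_0: "alternating Q n f \<Longrightarrow> xs\<in>plists Q n \<Longrightarrow> i \<noteq> j \<Longrightarrow> i < n \<Longrightarrow> j < n \<Longrightarrow> xs!i = xs!j \<Longrightarrow> f xs = 0"
  unfolding alternating_def by (metis linorder_neqE_nat)

lemma linear_slot_zero:
  assumes "subspace Q" "linear_slot Q n f k" "xs\<in>plists Q n"
  shows "f (xs[k := 0]) = 0"
proof -
  have z: "0 \<in> Q" using assms(1) subspace_0 by blast
  have "f (xs[k := scale (-1) 0 + 0]) = -1 * f (xs[k:=0]) + f (xs[k:=0])"
    by (rule linear_slotD[OF assms(2,3) z z])
  then show ?thesis by simp
qed

lemma linear_slot_add:
  assumes "subspace Q" "linear_slot Q n f k" "xs\<in>plists Q n" "u \<in> Q" "v \<in> Q"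
  shows "f (xs[k := u + v]) = f (xs[k:=u]) + f (xs[k:=v])"
  using linear_slotD[OF assms(2,3,4,5), of 1] by simp

lemma linear_slot_sum:
  assumes "subspace Q" "linear_slot Q n f k" "xs\<in>plists Q n" "finite T" "\<forall>t\<in>T. g t \<in> Q"
  shows "f (xs[k := (\<Sum>t\<in>T. scale (a t) (g t))]) = (\<Sum>t\<in>T. a t * f (xs[k := g t]))"
  using assms(4,5)
proof (induction T rule: finite_induct)
  case empty
  then show ?case using linear_slot_zero[OF assms(1,2,3)] by simp
next
  case (insert t T)
  have s: "(\<Sum>t\<in>T. scale (a t) (g t)) \<in> Q"
    using insert assms(1) by (auto intro!: subspace_sum subspace_scale)
  have "f (xs[k := (\<Sum>t\<in>insert t T. scale (a t) (g t))]) =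
        f (xs[k := scale (a t) (g t) + (\<Sum>t\<in>T. scale (a t) (g t))])"
    using insert by simp
  also have "\<dots> = a t * f (xs[k := g t]) + f (xs[k := (\<Sum>t\<in>T. scale (a t) (g t))])"
    by (rule linear_slotD[OF assms(2,3)]) (use insert s in auto)
  finally show ?case using insert by simp
qed

lemma alternating_swap:
  assumes Q: "subspace Q" and li: "linear_slot Q n f i" and lj: "linear_slot Q n f j" and al: "alternating Q n f"
    and ij: "i < j" "j < n" and xs: "xs \<in> plists Q n"
  shows "f (xs[i := xs!j, j := xs!i]) = - f xs"
proof -
  define a where "a = xs!i"
  define b where "b = xs!j"
  have aQ: "a \<in> Q" "b \<in> Q" using xs ij unfolding a_def b_def by (auto intro: plists_nth)
  have abQ: "a + b \<in> Q" using aQ Q by (simp add: subspace_add)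
  define Z where "Z u v = f (xs[i:=u, j:=v])" for u v
  have Zi: "Z (u + u') v = Z u v + Z u' v" if "u \<in> Q" "u' \<in> Q" "v \<in> Q" for u u' v
  proof -
    have "xs[j:=v] \<in> plists Q n" using xs that by (simp add: plists_update)
    from linear_slot_add[OF Q li this that(1,2)] show ?thesis
      unfolding Z_def using ij by (simp add: list_update_swap)
  qed
  have Zj: "Z u (v + v') = Z u v + Z u v'" if "u \<in> Q" "v \<in> Q" "v' \<in> Q" for u v v'
  proof -
    have "xs[i:=u] \<in> plists Q n" using xs that by (simp add: plists_update)
    from linear_slot_add[OF Q lj this that(2,3)] show ?thesis
      unfolding Z_def by simp
  qed
  have Zd: "Z u u = 0" if "u \<in> Q" for u
    unfolding Z_def
    by (rule alternatingD[OF al _ ij(1,2)]) (use xs that ij in \<open>auto simp: plists_update plists_iff nth_list_update\<close>)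
  have "0 = Z (a+b) (a+b)" using Zd abQ by simp
  also have "\<dots> = Z a a + Z a b + (Z b a + Z b b)" using Zi Zj aQ abQ by simp
  also have "\<dots> = Z a b + Z b a" using Zd aQ by simp
  finally have "Z b a = - Z a b" by (simp add: eq_neg_iff_add_eq_0 add.commute)
  moreover have "Z a b = f xs" unfolding Z_def a_def b_def by simp
  ultimately show ?thesis unfolding Z_def a_def b_def by simp
qed

definition multilinear :: "'b set \<Rightarrow> nat \<Rightarrow> ('b list \<Rightarrow> 'a) \<Rightarrow> bool" where
  "multilinear Q n f \<longleftrightarrow> (\<forall>k<n. linear_slot Q n f k)"

lemma alternating_update_to_front:
  assumes Q: "subspace Q" and ml: "multilinear Q n f" and al: "alternating Q n f"
  shows "xs \<in> plists Q n \<Longrightarrow> k < n \<Longrightarrow> w \<in> Q \<Longrightarrow> f (xs[k := w]) = (-1)^k * f (w # del1 k xs)"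
proof (induction k arbitrary: xs)
  case 0
  then obtain y ys where "xs = y # ys" by (cases xs) (auto simp: plists_def)
  then show ?case by (simp add: del1_def)
next
  case (Suc k)
  have len: "length xs = n" using Suc.prems plists_def by auto
  define xs' where "xs' = xs[Suc k := xs ! k]"
  have xs': "xs' \<in> plists Q n" using Suc.prems unfolding xs'_def
    by (simp add: plists_update plists_nth)
  let ?ys = "xs[Suc k := w]"
  have ys: "?ys \<in> plists Q n" using Suc.prems by (simp add: plists_update)
  have "f (?ys[k := ?ys ! Suc k, Suc k := ?ys ! k]) = - f ?ys"
    by (rule alternating_swap[OF Q _ _ al _ _ ys]) (use ml Suc.prems multilinear_def in auto)
  moreover have "?ys[k := ?ys ! Suc k, Suc k := ?ys ! k] = xs'[k := w]"
    unfolding xs'_def using Suc.prems len by (simp add: list_update_swap)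
  moreover have "f (xs'[k := w]) = (-1)^k * f (w # del1 k xs')"
    using Suc.IH[OF xs'] Suc.prems by simp
  moreover have "del1 k xs' = del1 (Suc k) xs" unfolding xs'_def
    by (rule del1_Suc_swap) (use Suc.prems len in auto)
  ultimately show ?case by simp
qed

lemma alternating_nth_to_front:
  assumes Q: "subspace Q" and ml: "multilinear Q n f" and al: "alternating Q n f"
    and xs: "xs \<in> plists Q n" and k: "k < n"
  shows "f xs = (-1)^k * f (xs ! k # del1 k xs)"
  using alternating_update_to_front[OF Q ml al xs k plists_nth[OF xs k]] by simp

lemma alternating_eq_0_if_entry_in_span:
  assumes Q: "subspace Q" and KQ: "K \<subseteq> Q"
    and ml: "multilinear Q m f" and al: "alternating Q m f"
    and kv: "\<forall>xs\<in>plists Q m. \<forall>p<m. xs!p \<in> K \<longrightarrow> f xs = 0"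
    and xs: "xs \<in> plists Q m" and p: "p < m"
    and k: "k \<in> K" and y: "y \<in> span (set (del1 p xs))" and eq: "xs ! p = k + y"
  shows "f xs = 0"
proof -
  have len: "length xs = m" using xs plists_def by auto
  have lp: "linear_slot Q m f p" using ml p multilinear_def by auto
  have T: "finite (set (del1 p xs))" "\<forall>v\<in>set (del1 p xs). v \<in> Q"
    using set_del1[of p xs] xs unfolding plists_def by auto
  obtain c where c: "y = (\<Sum>v\<in>set (del1 p xs). scale (c v) v)"
    using y span_finite[OF T(1)] by auto
  have yQ: "y \<in> Q" using T(2) Q unfolding c by (auto intro!: subspace_sum subspace_scale)
  have "f xs = f (xs[p := k + y])" using eq p len by (metis list_update_id)
  also have "\<dots> = f (xs[p := k]) + f (xs[p := y])"
    by (rule linear_slot_add[OF Q lp xs]) (use k KQ yQ in auto)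
  also have "f (xs[p := k]) = 0"
    using kv plists_update[OF xs, of k p] k KQ p len by auto
  also have "f (xs[p := y]) = (\<Sum>v\<in>set (del1 p xs). c v * f (xs[p := v]))"
    unfolding c by (rule linear_slot_sum[OF Q lp xs T])
  also have "\<dots> = 0"
  proof (rule sum.neutral, rule ballI)
    fix v assume "v \<in> set (del1 p xs)"
    then obtain q where q: "q < m" "q \<noteq> p" "xs ! q = v" using in_set_del1_nth len by metis
    have "f (xs[p := v]) = 0"
      by (rule alternating_eq_0[OF al plists_update[OF xs] q(2) q(1) p])
         (use T(2) q p len \<open>v \<in> set (del1 p xs)\<close> in auto)
    then show "c v * f (xs[p := v]) = 0" by simp
  qed
  finally show ?thesis by simp
qed

text \<open>A form vanishing on \<open>K\<close> lives on \<open>Q/K\<close>, whose dimension is at most \<open>card B\<close>.\<close>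

lemma alternating_vanishes_above_codim:
  assumes Q: "subspace Q" and KQ: "K \<subseteq> Q" and BK: "finite BK" "independent BK" "span BK \<subseteq> K"
    and B: "finite B" "Q \<subseteq> span (BK \<union> B)" "card B < m"
    and ml: "multilinear Q m f" and al: "alternating Q m f"
    and kv: "\<forall>xs\<in>plists Q m. \<forall>p<m. xs!p \<in> K \<longrightarrow> f xs = 0"
    and xs: "xs \<in> plists Q m"
  shows "f xs = 0"
proof (rule ccontr)
  assume nz: "f xs \<noteq> 0"
  have len: "length xs = m" using xs plists_def by auto
  have "independent (BK \<union> set (take k xs)) \<and> distinct (take k xs) \<and> BK \<inter> set (take k xs) = {}"
    if "k \<le> m" for k
    using that
  proof (induction k)
    case 0
    then show ?case using BK by simp
  next
    case (Suc k)
    have new: "xs ! k \<notin> span (BK \<union> set (take k xs))"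
    proof
      assume "xs ! k \<in> span (BK \<union> set (take k xs))"
      then obtain a b where ab: "a \<in> span BK" "b \<in> span (set (take k xs))" "xs ! k = a + b"
        unfolding span_Un by blast
      have "set (take k xs) \<subseteq> set (del1 k xs)" unfolding del1_def by simp
      then have "b \<in> span (set (del1 k xs))" using ab(2) span_mono by blast
      then have "f xs = 0"
        using alternating_eq_0_if_entry_in_span[OF Q KQ ml al kv xs _ _ _ ab(3)] ab(1) BK(3) Suc by auto
      with nz show False ..
    qed
    have take: "take (Suc k) xs = take k xs @ [xs ! k]" using Suc len by (simp add: take_Suc_conv_app_nth)
    show ?case
      using Suc new independent_insertI[OF new] span_base[of "xs ! k" "BK \<union> set (take k xs)"]
      unfolding take by auto
  qed
  from this[of m] have ind: "independent (BK \<union> set xs)" and "distinct xs" and disj: "BK \<inter> set xs = {}"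
    using len by auto
  have "set xs \<subseteq> span (BK \<union> B)" using xs B(2) unfolding plists_def by blast
  moreover have "BK \<subseteq> span (BK \<union> B)" using span_superset by blast
  ultimately have "card (BK \<union> set xs) \<le> card (BK \<union> B)"
    using independent_span_bound[OF _ ind] B(1) BK(1) by simp
  also have "\<dots> \<le> card BK + card B" by (rule card_Un_le)
  finally have "m \<le> card B"
    using card_Un_disjoint[OF BK(1) _ disj] \<open>distinct xs\<close> len distinct_card by fastforce
  with B(3) show False by simp
qed

end

lemma minus_one_power_odd_add: "odd (i + j) \<Longrightarrow> (-1 :: 'a::ring_1) ^ j = - ((-1) ^ i)"
  by (auto simp: minus_one_power_iff)

lemma minus_one_power_even_add: "even (i + j) \<Longrightarrow> (-1 :: 'a::ring_1) ^ i = (-1) ^ j"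
  by (auto simp: minus_one_power_iff)

lemma sign_if_less: "(if r < (m::nat) then 1 else -1 :: 'a::ring_1) = (-1) ^ (if r < m then 0 else 1)"
  by simp

text \<open>Here \<open>a\<close> and \<open>b\<close> are the positions of \<open>w0\<close> in \<open>del2 r m xs\<close> and of \<open>r\<close> in \<open>del2 w0 m xs\<close>.\<close>

lemma parity_swap_equal_entries:
  assumes "r \<noteq> m" "w0 \<noteq> r" "w0 \<noteq> m"
    and "a + (if r < w0 then 1 else 0) + (if m < w0 then 1 else 0) = (w0::nat)"
    and "b + (if w0 < r then 1 else 0) + (if m < r then 1 else 0) = r"
  shows "odd ((r+m+(if r < m then 0 else 1)+a) + (w0+m+(if w0 < m then 0 else 1)+b))"
  using assms by (auto split: if_splits)

lemma parity_move_to_front: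
  assumes "p \<noteq> (m::nat)" "k + (if p < m then 1 else 0) = m"
  shows "even ((p + m + (if p < m then 0 else 1) + k) + Suc p)"
  using assms by (auto split: if_splits)

lemma sum_eq_0_by_involution:
  fixes g :: "'b \<Rightarrow> complex"
  assumes fin: "finite A" and m: "\<And>x. x \<in> A \<Longrightarrow> phi x \<in> A" and inv: "\<And>x. x \<in> A \<Longrightarrow> phi (phi x) = x"
    and neg: "\<And>x. x \<in> A \<Longrightarrow> g (phi x) = - g x"
  shows "(\<Sum>x\<in>A. g x) = 0"
proof -
  have "(\<Sum>x\<in>A. g (phi x)) = (\<Sum>x\<in>A. g x)"
    by (rule sum.reindex_bij_witness[of _ phi phi]) (use m inv in auto)
  then have "(\<Sum>x\<in>A. - g x) = (\<Sum>x\<in>A. g x)" using neg by (metis (no_types, lifting) sum.cong)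
  then have "- (\<Sum>x\<in>A. g x) = (\<Sum>x\<in>A. g x)" by (simp add: sum_negf)
  then show ?thesis by simp
qed

section \<open>Lie algebras and relative cochains\<close>

locale complex_lie_algebra =
  fixes sc :: "complex \<Rightarrow> 'a::ab_group_add \<Rightarrow> 'a" and br :: "'a \<Rightarrow> 'a \<Rightarrow> 'a"
  assumes lie: "lie_algebra sc br"
begin

sublocale alternating_forms sc
  using lie unfolding lie_algebra_def alternating_forms_def by blast

lemma br_add_left: "br (x + y) z = br x z + br y z"
  and br_add_right: "br x (y + z) = br x y + br x z"
  and br_scale_left: "br (sc a x) y = sc a (br x y)"
  and br_scale_right: "br x (sc a y) = sc a (br x y)"
  and br_self: "br x x = 0"
  and jacobi: "br x (br y z) + br y (br z x) + br z (br x y) = 0"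
  using lie unfolding lie_algebra_def by blast+

lemma br_zero_left[simp]: "br 0 y = 0"
  using br_add_left[of 0 0 y] by simp

lemma br_zero_right[simp]: "br x 0 = 0"
  using br_add_right[of x 0 0] by simp

lemma br_antisym: "br y x = - br x y"
proof -
  have "br (x+y) (x+y) = (br x x + br y x) + (br x y + br y y)"
    by (simp only: br_add_left br_add_right)
  then have "0 = br x y + br y x" by (simp add: br_self add.commute)
  then show ?thesis by (metis add.commute eq_neg_iff_add_eq_0)
qed

lemma br_neg_right: "br x (- y) = - br x y"
  using br_add_right[of x y "-y"] by (simp add: eq_neg_iff_add_eq_0 add.commute)

lemma br_sum_left: "br (\<Sum>t\<in>T. g t) y = (\<Sum>t\<in>T. br (g t) y)"
  by (induction T rule: infinite_finite_induct) (auto simp: br_add_left)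

lemma br_sum_right: "br y (\<Sum>t\<in>T. g t) = (\<Sum>t\<in>T. br y (g t))"
  by (induction T rule: infinite_finite_induct) (auto simp: br_add_right)

lemma jacobi_ad: "br (br x y) z = br x (br y z) - br y (br x z)"
proof -
  have "br x (br y z) + br y (br z x) + br z (br x y) = 0" by (rule jacobi)
  moreover have "br z x = - br x z" by (rule br_antisym)
  moreover have "br z (br x y) = - br (br x y) z" by (rule br_antisym)
  ultimately show ?thesis by (simp add: br_neg_right algebra_simps)
qed

lemma br_leibniz: "br z (br x y) = br (br z x) y + br x (br z y)"
  by (simp add: jacobi_ad)

definition ce_term :: "('a list \<Rightarrow> complex) \<Rightarrow> 'a list \<Rightarrow> nat \<Rightarrow> nat \<Rightarrow> complex" where
  "ce_term c xs i j = (-1)^(i+j) * c (br (xs!i) (xs!j) # del2 i j xs)"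

definition index_pairs :: "nat \<Rightarrow> (nat \<times> nat) set" where
  "index_pairs N = {(i,j). i < j \<and> j < N}"

lemma finite_index_pairs: "finite (index_pairs N)"
  unfolding index_pairs_def by (rule finite_subset[of _ "{..<N} \<times> {..<N}"]) auto

lemma ce_diff_index_pairs: "ce_diff br n c xs = (\<Sum>x\<in>index_pairs (Suc n). ce_term c xs (fst x) (snd x))"
proof -
  have "ce_diff br n c xs = (\<Sum>i<Suc n. \<Sum>j\<in>{i<..<Suc n}. ce_term c xs i j)"
    unfolding ce_diff_def ce_term_def ..
  also have "\<dots> = (\<Sum>x\<in>Sigma {..<Suc n} (\<lambda>i. {i<..<Suc n}). ce_term c xs (fst x) (snd x))"
    by (subst sum.Sigma) (auto simp: split_def)
  also have "Sigma {..<Suc n} (\<lambda>i. {i<..<Suc n}) = index_pairs (Suc n)"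
    unfolding index_pairs_def by auto
  finally show ?thesis .
qed

lemma lie_gen_subspace: "subspace (lie_gen sc br X)"
  unfolding subspace_def by (auto intro: lie_gen.intros)

lemma lie_gen_br: "x \<in> lie_gen sc br X \<Longrightarrow> y \<in> lie_gen sc br X \<Longrightarrow> br x y \<in> lie_gen sc br X"
  by (rule lie_gen.bracket)

lemma lie_gen_mono: assumes "X \<subseteq> Y" shows "lie_gen sc br X \<subseteq> lie_gen sc br Y"
proof
  fix x assume "x \<in> lie_gen sc br X"
  then show "x \<in> lie_gen sc br Y"
    by (induction rule: lie_gen.induct) (use assms in \<open>auto intro: lie_gen.intros\<close>)
qed

end

locale lie_subalgebra_pair = complex_lie_algebra sc br for sc :: "complex \<Rightarrow> 'a::ab_group_add \<Rightarrow> 'a" and br +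
  fixes P K :: "'a set"
  assumes P_subspace: "subspace P" and P_br: "\<And>x y. x \<in> P \<Longrightarrow> y \<in> P \<Longrightarrow> br x y \<in> P"
    and K_subset_P: "K \<subseteq> P"
begin

lemma rel_cochain_multilinear: "rel_cochain sc br P K n c \<Longrightarrow> multilinear P n c"
  unfolding rel_cochain_def multilinear_def linear_slot_def by blast

lemma rel_cochain_alternating: "rel_cochain sc br P K n c \<Longrightarrow> alternating P n c"
  unfolding rel_cochain_def alternating_def by blast

lemma rel_cochain_vanishes: "rel_cochain sc br P K n c \<Longrightarrow> xs \<in> plists P n \<Longrightarrow> p < n \<Longrightarrow> xs!p \<in> K \<Longrightarrow> c xs = 0"
  unfolding rel_cochain_def by blast

lemma rel_cochain_invariant: "rel_cochain sc br P K n c \<Longrightarrow> xs \<in> plists P n \<Longrightarrow> y \<in> K \<Longrightarrow>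
   (\<Sum>i<n. c (xs[i := br y (xs ! i)])) = 0"
  unfolding rel_cochain_def by blast

lemma P_zero: "0 \<in> P" using P_subspace subspace_0 by blast

context
  fixes n c assumes rc: "rel_cochain sc br P K (Suc n) c"
begin

lemma cochain_linear_head: "rest \<in> plists P n \<Longrightarrow> u \<in> P \<Longrightarrow> v \<in> P \<Longrightarrow>
    c ((sc a u + v) # rest) = a * c (u # rest) + c (v # rest)"
  using linear_slotD[of P "Suc n" c 0 "u # rest" u v a] rel_cochain_multilinear[OF rc]
  by (simp add: multilinear_def plists_Cons)

lemma cochain_linear_tail: "rest \<in> plists P n \<Longrightarrow> b \<in> P \<Longrightarrow> u \<in> P \<Longrightarrow> v \<in> P \<Longrightarrow> k < n \<Longrightarrow>
    c (b # rest[k := sc a u + v]) = a * c (b # rest[k:=u]) + c (b # rest[k:=v])"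
  using linear_slotD[of P "Suc n" c "Suc k" "b # rest" u v a] rel_cochain_multilinear[OF rc]
  by (simp add: multilinear_def plists_Cons)

lemma cochain_zero_head: "rest \<in> plists P n \<Longrightarrow> c (0 # rest) = 0"
  using cochain_linear_head[of rest 0 0 1] P_zero by simp

lemma cochain_uminus_head: "rest \<in> plists P n \<Longrightarrow> u \<in> P \<Longrightarrow> c ((- u) # rest) = - c (u # rest)"
  using cochain_linear_head[of rest u 0 "-1"] P_zero cochain_zero_head by (simp add: scale_minus_left)

lemma ce_term_linear:
  assumes xs: "xs \<in> plists P (Suc (Suc n))" and ij: "i < j" "j < Suc (Suc n)" and p: "p < Suc (Suc n)"
    and u: "u \<in> P" and v: "v \<in> P"
  shows "ce_term c (xs[p := sc a u + v]) i j = a * ce_term c (xs[p:=u]) i j + ce_term c (xs[p:=v]) i j"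
proof -
  have len: "length xs = Suc (Suc n)" using xs plists_def by auto
  define rest where "rest = del2 i j xs"
  have rest: "rest \<in> plists P n" unfolding rest_def using plists_del2[OF xs] ij by auto
  have xi: "xs!i \<in> P" "xs!j \<in> P" using plists_nth[OF xs, of i] plists_nth[OF xs, of j] ij by auto
  consider "p = i" | "p = j" | "p \<noteq> i" "p \<noteq> j" by blast
  then show ?thesis
  proof cases
    case 1
    have d: "del2 i j (xs[p:=w]) = rest" for w unfolding rest_def using 1 by (simp add: del2_update_deleted)
    have e: "(xs[p:=w]) ! i = w" "(xs[p:=w]) ! j = xs ! j" for w using 1 ij len by auto
    have "c (br (sc a u + v) (xs!j) # rest) = a * c (br u (xs!j) # rest) + c (br v (xs!j) # rest)"
      unfolding br_add_left br_scale_left by (rule cochain_linear_head[OF rest]) (use u v xi P_br in auto)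
    then show ?thesis unfolding ce_term_def d e by (simp add: algebra_simps)
  next
    case 2
    have d: "del2 i j (xs[p:=w]) = rest" for w unfolding rest_def using 2 by (simp add: del2_update_deleted)
    have e: "(xs[p:=w]) ! j = w" "(xs[p:=w]) ! i = xs ! i" for w using 2 ij len by auto
    have "c (br (xs!i) (sc a u + v) # rest) = a * c (br (xs!i) u # rest) + c (br (xs!i) v # rest)"
      unfolding br_add_right br_scale_right by (rule cochain_linear_head[OF rest]) (use u v xi P_br in auto)
    then show ?thesis unfolding ce_term_def d e by (simp add: algebra_simps)
  next
    case 3
    define pos where "pos = length (filter (\<lambda>k. k \<noteq> i \<and> k \<noteq> j) [0..<p])"
    have d: "del2 i j (xs[p:=w]) = rest[pos := w]" for w
      unfolding rest_def pos_def by (rule del2_update_kept) (use 3 p len in auto)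
    have e: "(xs[p:=w]) ! i = xs ! i" "(xs[p:=w]) ! j = xs ! j" for w using 3 by auto
    have pl: "pos < n" using index_in_del2_less[of p i j xs] 3 p len rest unfolding pos_def rest_def plists_def by auto
    have "c (br (xs!i) (xs!j) # rest[pos := sc a u + v]) =
        a * c (br (xs!i) (xs!j) # rest[pos := u]) + c (br (xs!i) (xs!j) # rest[pos := v])"
      by (rule cochain_linear_tail[OF rest _ u v pl]) (use xi P_br in auto)
    then show ?thesis unfolding ce_term_def d e by (simp add: algebra_simps)
  qed
qed

lemma ce_diff_multilinear: "multilinear P (Suc (Suc n)) (ce_diff br (Suc n) c)"
  unfolding multilinear_def linear_slot_def
proof (intro allI impI ballI)
  fix p xs u v a assume p: "p < Suc (Suc n)" and xs: "xs \<in> plists P (Suc (Suc n))" and u: "u \<in> P" and v: "v \<in> P"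
  have "ce_diff br (Suc n) c (xs[p := sc a u + v]) =
     (\<Sum>x\<in>index_pairs (Suc (Suc n)). a * ce_term c (xs[p:=u]) (fst x) (snd x) + ce_term c (xs[p:=v]) (fst x) (snd x))"
    unfolding ce_diff_index_pairs
    by (rule sum.cong[OF refl], rule ce_term_linear[OF xs _ _ p u v]) (auto simp: index_pairs_def)
  then show "ce_diff br (Suc n) c (xs[p := sc a u + v]) =
        a * ce_diff br (Suc n) c (xs[p := u]) + ce_diff br (Suc n) c (xs[p := v])"
    unfolding ce_diff_index_pairs by (simp add: sum.distrib sum_distrib_left)
qed

lemma ce_term_min_max:
  assumes xs: "xs \<in> plists P (Suc (Suc n))" and rm: "r \<noteq> m" "r < Suc (Suc n)" "m < Suc (Suc n)"
  shows "ce_term c xs (min r m) (max r m) =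
     (-1)^(r+m) * (if r < m then 1 else -1) * c (br (xs!r) (xs!m) # del2 r m xs)"
proof -
  have rest: "del2 r m xs \<in> plists P n" using plists_del2[OF xs] rm by auto
  have xi: "xs!r \<in> P" "xs!m \<in> P" using plists_nth[OF xs, of r] plists_nth[OF xs, of m] rm by auto
  show ?thesis
  proof (cases "r < m")
    case True then show ?thesis unfolding ce_term_def by (simp add: min_def max_def)
  next
    case False
    then have mr: "m < r" using rm by simp
    have b: "br (xs!r) (xs!m) \<in> P" using xi P_br by auto
    have e: "br (xs!m) (xs!r) = - br (xs!r) (xs!m)" by (rule br_antisym)
    have "c (br (xs!m) (xs!r) # del2 r m xs) = - c (br (xs!r) (xs!m) # del2 r m xs)"
      unfolding e by (rule cochain_uminus_head[OF rest b])
    then show ?thesis unfolding ce_term_def using mr by (simp add: min_def max_def del2_commute add.commute)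
  qed
qed

lemma ce_term_move_entry:
  assumes xs: "xs \<in> plists P (Suc (Suc n))" and d: "r \<noteq> m" "w0 \<noteq> r" "w0 \<noteq> m"
    and l: "r < Suc (Suc n)" "m < Suc (Suc n)" "w0 < Suc (Suc n)"
  shows "ce_term c xs (min r m) (max r m) =
     (-1)^(r+m) * (if r < m then 1 else -1) * (-1)^(length (filter (\<lambda>k. k \<noteq> r \<and> k \<noteq> m) [0..<w0])) *
     c (br (xs!r) (xs!m) # xs!w0 # map (nth xs) (filter (\<lambda>k. k \<noteq> r \<and> k \<noteq> m \<and> k \<noteq> w0) [0..<Suc (Suc n)]))"
proof -
  have len: "length xs = Suc (Suc n)" using xs plists_def by auto
  define pos where "pos = length (filter (\<lambda>k. k \<noteq> r \<and> k \<noteq> m) [0..<w0])"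
  define zs where "zs = del2 r m xs"
  define W where "W = br (xs!r) (xs!m)"
  have zs: "zs \<in> plists P n" unfolding zs_def using plists_del2[OF xs] d l by auto
  have xi: "xs!r \<in> P" "xs!m \<in> P" "xs!w0 \<in> P" using plists_nth[OF xs] l by auto
  have W: "W \<in> P" unfolding W_def using xi P_br by auto
  have pl: "pos < n" using index_in_del2_less[of w0 r m xs] d l len zs unfolding pos_def zs_def plists_def by auto
  have zpos: "zs ! pos = xs ! w0" unfolding zs_def pos_def by (rule nth_del2_index) (use d l len in auto)
  have del_eq: "del1 pos zs = map (nth xs) (filter (\<lambda>k. k \<noteq> r \<and> k \<noteq> m \<and> k \<noteq> w0) [0..<Suc (Suc n)])"
    unfolding zs_def pos_def using del1_del2[of w0 r m xs] d l len by simp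
  have Wz: "W # zs \<in> plists P (Suc n)" using zs W by (simp add: plists_Cons)
  have "c (W # zs) = (-1)^(Suc pos) * c ((W # zs) ! Suc pos # del1 (Suc pos) (W # zs))"
    by (rule alternating_nth_to_front[OF P_subspace rel_cochain_multilinear[OF rc] rel_cochain_alternating[OF rc] Wz]) (use pl in simp)
  also have "(W # zs) ! Suc pos # del1 (Suc pos) (W # zs) = xs!w0 # W # del1 pos zs"
    using zpos by (simp add: del1_Cons_Suc)
  also have "c (xs!w0 # W # del1 pos zs) = - c (W # xs!w0 # del1 pos zs)"
  proof -
    have L: "xs!w0 # W # del1 pos zs \<in> plists P (Suc n)"
      using plists_del1[of zs P "n - 1" pos] zs pl W xi by (cases n) (auto simp: plists_Cons)
    have "c ((xs!w0 # W # del1 pos zs)[0 := (xs!w0 # W # del1 pos zs)!1, 1 := (xs!w0 # W # del1 pos zs)!0])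
        = - c (xs!w0 # W # del1 pos zs)"
      by (rule alternating_swap[OF P_subspace _ _ rel_cochain_alternating[OF rc] _ _ L])
         (use rel_cochain_multilinear[OF rc] pl in \<open>auto simp: multilinear_def\<close>)
    then show ?thesis by simp
  qed
  finally have "c (W # zs) = (-1)^pos * c (W # xs!w0 # del1 pos zs)" by simp
  then show ?thesis unfolding ce_term_min_max[OF xs d(1) l(1,2)] del_eq
    by (simp add: W_def zs_def pos_def)
qed

lemma ce_term_swap_equal_entries:
  assumes xs: "xs \<in> plists P (Suc (Suc n))" and d: "r \<noteq> m" "w0 \<noteq> r" "w0 \<noteq> m"
    and l: "r < Suc (Suc n)" "m < Suc (Suc n)" "w0 < Suc (Suc n)" and eq: "xs!r = xs!w0"
  shows "ce_term c xs (min w0 m) (max w0 m) = - ce_term c xs (min r m) (max r m)"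
proof -
  define a where "a = length (filter (\<lambda>k. k \<noteq> r \<and> k \<noteq> m) [0..<w0])"
  define b where "b = length (filter (\<lambda>k. k \<noteq> w0 \<and> k \<noteq> m) [0..<r])"
  have ha: "a + (if r < w0 then 1 else 0) + (if m < w0 then 1 else 0) = w0"
    unfolding a_def by (rule length_filter_upt_neq2) (use d in auto)
  have hb: "b + (if w0 < r then 1 else 0) + (if m < r then 1 else 0) = r"
    unfolding b_def by (rule length_filter_upt_neq2) (use d in auto)
  have fe: "filter (\<lambda>k. k \<noteq> w0 \<and> k \<noteq> m \<and> k \<noteq> r) [0..<Suc (Suc n)] =
            filter (\<lambda>k. k \<noteq> r \<and> k \<noteq> m \<and> k \<noteq> w0) [0..<Suc (Suc n)]"
    by (rule filter_cong) auto
  define R where "R = c (br (xs!r) (xs!m) # xs!w0 #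
    map (nth xs) (filter (\<lambda>k. k \<noteq> r \<and> k \<noteq> m \<and> k \<noteq> w0) [0..<Suc (Suc n)]))"
  have d2: "w0 \<noteq> m" "r \<noteq> w0" "r \<noteq> m" using d by auto
  have m1: "ce_term c xs (min r m) (max r m) =
     (-1)^(r+m) * (if r < m then 1 else -1) * (-1)^a * R"
    unfolding R_def a_def by (rule ce_term_move_entry[OF xs d l])
  have m2: "ce_term c xs (min w0 m) (max w0 m) =
     (-1)^(w0+m) * (if w0 < m then 1 else -1) * (-1)^b *
     c (br (xs!w0) (xs!m) # xs!r # map (nth xs) (filter (\<lambda>k. k \<noteq> w0 \<and> k \<noteq> m \<and> k \<noteq> r) [0..<Suc (Suc n)]))"
    unfolding b_def by (rule ce_term_move_entry[OF xs d2 l(3,2,1)])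
  have c1: "ce_term c xs (min r m) (max r m) = (-1)^(r+m+(if r < m then 0 else 1)+a) * R"
    unfolding m1 sign_if_less power_add by (simp only: mult.assoc)
  have c2: "ce_term c xs (min w0 m) (max w0 m) = (-1)^(w0+m+(if w0 < m then 0 else 1)+b) * R"
    unfolding m2 sign_if_less power_add fe R_def eq[symmetric] by (simp only: mult.assoc)
  have "(-1::complex)^(w0+m+(if w0 < m then 0 else 1)+b) = - ((-1)^(r+m+(if r < m then 0 else 1)+a))"
    by (rule minus_one_power_odd_add, rule parity_swap_equal_entries[OF d ha hb])
  then show ?thesis unfolding c1 c2 by simp
qed

lemma ce_term_eq_0_if_repeated_entry_kept:
  assumes xs: "xs \<in> plists P (Suc (Suc n))" and ij: "i < j" "j < Suc (Suc n)"
    and pq: "p < q" "q < Suc (Suc n)" "xs ! p = xs ! q" and kept: "i \<noteq> p" "i \<noteq> q" "j \<noteq> p" "j \<noteq> q"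
  shows "ce_term c xs i j = 0"
proof -
  have len: "length xs = Suc (Suc n)" using xs plists_def by auto
  define zs where "zs = del2 i j xs"
  have zs: "zs \<in> plists P n" unfolding zs_def using plists_del2[OF xs] ij by auto
  define a where "a = length (filter (\<lambda>k. k \<noteq> i \<and> k \<noteq> j) [0..<p])"
  define b where "b = length (filter (\<lambda>k. k \<noteq> i \<and> k \<noteq> j) [0..<q])"
  have ab: "a < b" unfolding a_def b_def by (rule length_filter_mono) (use pq kept in auto)
  have bl: "b < n" using index_in_del2_less[of q i j xs] kept pq len zs unfolding b_def zs_def plists_def by auto
  have za: "zs ! a = xs ! p" unfolding zs_def a_def by (rule nth_del2_index) (use kept pq len in auto)
  have zb: "zs ! b = xs ! q" unfolding zs_def b_def by (rule nth_del2_index) (use kept pq len in auto)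
  have W: "br (xs!i) (xs!j) \<in> P" using P_br plists_nth[OF xs] ij by auto
  have "c (br (xs!i) (xs!j) # zs) = 0"
    by (rule alternating_eq_0[OF rel_cochain_alternating[OF rc], of _ "Suc a" "Suc b"])
       (use zs W ab bl za zb pq in \<open>auto simp: plists_Cons\<close>)
  then show ?thesis unfolding ce_term_def zs_def by simp
qed

lemma ce_term_eq_0_if_bracket_of_equal:
  assumes xs: "xs \<in> plists P (Suc (Suc n))" and ij: "i < j" "j < Suc (Suc n)" and eq: "xs ! i = xs ! j"
  shows "ce_term c xs i j = 0"
  using cochain_zero_head[OF plists_del2[OF xs]] ij eq unfolding ce_term_def by (simp add: br_self)

text \<open>Swapping the two equal entries is a sign-reversing involution on the terms of the differential.\<close>

lemma ce_diff_alternating: "alternating P (Suc (Suc n)) (ce_diff br (Suc n) c)"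
  unfolding alternating_def
proof (intro ballI allI impI)
  fix xs p q assume xs: "xs \<in> plists P (Suc (Suc n))" and pq: "p < q \<and> q < Suc (Suc n) \<and> xs ! p = xs ! q"
  define sw where "sw k = (if k = p then q else if k = q then p else k)" for k
  define phi where "phi x = (min (sw (fst x)) (sw (snd x)), max (sw (fst x)) (sw (snd x)))" for x
  define g where "g x = ce_term c xs (fst x) (snd x)" for x
  have "(\<Sum>x\<in>index_pairs (Suc (Suc n)). g x) = 0"
  proof (rule sum_eq_0_by_involution[OF finite_index_pairs])
    fix x assume "x \<in> index_pairs (Suc (Suc n))"
    then obtain i j where x: "x = (i,j)" "i < j" "j < Suc (Suc n)" unfolding index_pairs_def by auto
    show "phi x \<in> index_pairs (Suc (Suc n))"
      using x pq unfolding phi_def sw_def index_pairs_def by (auto simp: min_def max_def)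
    show "phi (phi x) = x" using x pq unfolding phi_def sw_def by (auto simp: min_def max_def)
    show "g (phi x) = - g x"
    proof (cases "i \<noteq> p \<and> i \<noteq> q \<and> j \<noteq> p \<and> j \<noteq> q \<or> i = p \<and> j = q")
      case True
      then have "phi x = x" "g x = 0"
        using x ce_term_eq_0_if_repeated_entry_kept[OF xs x(2,3)] ce_term_eq_0_if_bracket_of_equal[OF xs x(2,3)] pq
        unfolding phi_def sw_def g_def by auto
      then show ?thesis by simp
    next
      case False
      define r where "r = (if i = p \<or> i = q then i else j)"
      define m where "m = (if i = p \<or> i = q then j else i)"
      have rpq: "r = p \<or> r = q" and mpq: "m \<noteq> p" "m \<noteq> q"
        using False x pq unfolding r_def m_def by auto
      have rm: "r \<noteq> m" using x unfolding r_def m_def by auto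
      have xeq: "x = (min r m, max r m)" using x unfolding r_def m_def by (auto simp: min_def max_def)
      have pheq: "phi x = (min (sw r) m, max (sw r) m)"
        unfolding xeq phi_def using mpq sw_def by (auto simp: min_def max_def)
      have l: "r < Suc (Suc n)" "m < Suc (Suc n)" "sw r < Suc (Suc n)"
        using x pq rpq unfolding r_def m_def sw_def by auto
      have "ce_term c xs (min (sw r) m) (max (sw r) m) = - ce_term c xs (min r m) (max r m)"
        by (rule ce_term_swap_equal_entries[OF xs rm _ _ l]) (use rpq mpq pq in \<open>auto simp: sw_def\<close>)
      then show ?thesis using pheq xeq unfolding g_def by (metis fst_conv snd_conv)
    qed
  qed
  then show "ce_diff br (Suc n) c xs = 0" unfolding ce_diff_index_pairs g_def .
qed

lemma ce_term_eq_0_if_K_entry_kept: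
  assumes xs: "xs \<in> plists P (Suc (Suc n))" and ij: "i < j" "j < Suc (Suc n)"
    and p: "p < Suc (Suc n)" "i \<noteq> p" "j \<noteq> p" and yK: "xs ! p \<in> K"
  shows "ce_term c xs i j = 0"
proof -
  have len: "length xs = Suc (Suc n)" using xs plists_def by auto
  define zs where "zs = del2 i j xs"
  have zs: "zs \<in> plists P n" unfolding zs_def using plists_del2[OF xs] ij by auto
  define a where "a = length (filter (\<lambda>k. k \<noteq> i \<and> k \<noteq> j) [0..<p])"
  have al: "a < n" using index_in_del2_less[of p i j xs] ij p len zs unfolding a_def zs_def plists_def by auto
  have za: "zs ! a = xs ! p" unfolding zs_def a_def by (rule nth_del2_index) (use ij p len in auto)
  have W: "br (xs!i) (xs!j) \<in> P" using P_br plists_nth[OF xs] ij by auto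
  have "c (br (xs!i) (xs!j) # zs) = 0"
    by (rule rel_cochain_vanishes[OF rc, of _ "Suc a"]) (use zs W al za yK in \<open>auto simp: plists_Cons\<close>)
  then show ?thesis unfolding ce_term_def zs_def by simp
qed

lemma ce_term_as_update:
  assumes xs: "xs \<in> plists P (Suc (Suc n))" and p: "p < Suc (Suc n)" and m: "m < Suc (Suc n)" "m \<noteq> p"
  shows "ce_term c xs (min p m) (max p m) =
    (-1)^(Suc p) * c ((del1 p xs)[length (filter (\<lambda>k. k \<noteq> p) [0..<m]) := br (xs!p) (xs!m)])"
proof -
  have len: "length xs = Suc (Suc n)" using xs plists_def by auto
  define zs where "zs = del1 p xs"
  have zs: "zs \<in> plists P (Suc n)" unfolding zs_def using plists_del1[OF xs p] .
  define k where "k = length (filter (\<lambda>k. k \<noteq> p) [0..<m])"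
  have k: "k + (if p < m then 1 else 0) = m" unfolding k_def by (rule length_filter_upt_neq)
  have d: "del2 p m xs = del1 k zs" "zs ! k = xs ! m"
    unfolding zs_def k_def using del2_as_del1[of p m xs] m p len by auto
  have kl: "k < Suc n" using k m p by (auto split: if_splits)
  have w: "br (xs!p) (xs!m) \<in> P" using P_br plists_nth[OF xs] p m by auto
  have mv: "c (zs[k := br (xs!p) (xs!m)]) = (-1)^k * c (br (xs!p) (xs!m) # del2 p m xs)"
    unfolding d(1)
    by (rule alternating_update_to_front[OF P_subspace rel_cochain_multilinear[OF rc]
          rel_cochain_alternating[OF rc] zs kl w])
  have "ce_term c xs (min p m) (max p m) =
      (-1)^(p + m + (if p < m then 0 else 1)) * c (br (xs!p) (xs!m) # del2 p m xs)"
    by (simp add: ce_term_min_max[OF xs m(2)[symmetric] p m(1)] sign_if_less power_add)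
  also have "\<dots> = (-1)^(p + m + (if p < m then 0 else 1) + k) * c (zs[k := br (xs!p) (xs!m)])"
    unfolding mv by (simp add: power_add)
  also have "(-1::complex)^(p + m + (if p < m then 0 else 1) + k) = (-1)^(Suc p)"
    by (rule minus_one_power_even_add, rule parity_move_to_front) (use m k in auto)
  finally show ?thesis unfolding zs_def k_def .
qed

lemma ce_diff_vanishes:
  assumes xs: "xs \<in> plists P (Suc (Suc n))" and p: "p < Suc (Suc n)" and yK: "xs!p \<in> K"
  shows "ce_diff br (Suc n) c xs = 0"
proof -
  define y where "y = xs ! p"
  define zs where "zs = del1 p xs"
  have zs: "zs \<in> plists P (Suc n)" unfolding zs_def using plists_del1[OF xs p] .
  define pos where "pos m = length (filter (\<lambda>k. k \<noteq> p) [0..<m])" for m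
  define g where "g x = ce_term c xs (fst x) (snd x)" for x
  define A1 where "A1 = {x\<in>index_pairs (Suc (Suc n)). fst x = p \<or> snd x = p}"
  have "(\<Sum>x\<in>index_pairs (Suc (Suc n)). g x) = (\<Sum>x\<in>A1. g x)"
  proof (rule sum.mono_neutral_right[OF finite_index_pairs])
    show "A1 \<subseteq> index_pairs (Suc (Suc n))" unfolding A1_def by auto
    show "\<forall>x\<in>index_pairs (Suc (Suc n)) - A1. g x = 0"
    proof
      fix x assume "x \<in> index_pairs (Suc (Suc n)) - A1"
      then obtain i j where "x = (i, j)" "i < j" "j < Suc (Suc n)" "i \<noteq> p" "j \<noteq> p"
        unfolding A1_def index_pairs_def by auto
      then show "g x = 0" unfolding g_def using ce_term_eq_0_if_K_entry_kept[OF xs _ _ p _ _ yK] by simp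
    qed
  qed
  also have "\<dots> = (\<Sum>m\<in>{..<Suc (Suc n)} - {p}. g (min p m, max p m))"
    by (rule sum.reindex_bij_witness[of _ "\<lambda>m. (min p m, max p m)" "\<lambda>x. if fst x = p then snd x else fst x"])
       (use p in \<open>auto simp: A1_def index_pairs_def min_def max_def\<close>)
  also have "\<dots> = (\<Sum>m\<in>{..<Suc (Suc n)} - {p}. (-1)^(Suc p) * c (zs[pos m := br y (zs ! pos m)]))"
  proof (rule sum.cong[OF refl])
    fix m assume m: "m \<in> {..<Suc (Suc n)} - {p}"
    have "zs ! pos m = xs ! m"
      unfolding zs_def pos_def using del2_as_del1(2)[of p m xs] m p xs by (auto simp: plists_def)
    then show "g (min p m, max p m) = (-1)^(Suc p) * c (zs[pos m := br y (zs ! pos m)])"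
      using ce_term_as_update[OF xs p] m unfolding g_def zs_def pos_def y_def by simp
  qed
  also have "\<dots> = (\<Sum>k\<in>{..<Suc n}. (-1)^(Suc p) * c (zs[k := br y (zs ! k)]))"
    unfolding pos_def by (rule sum_skip_index[OF p])
  also have "\<dots> = (-1)^(Suc p) * (\<Sum>k<Suc n. c (zs[k := br y (zs ! k)]))"
    by (rule sum_distrib_left[symmetric])
  also have "(\<Sum>k<Suc n. c (zs[k := br y (zs ! k)])) = 0"
    by (rule rel_cochain_invariant[OF rc zs]) (use yK y_def in simp)
  finally show ?thesis unfolding ce_diff_index_pairs g_def by simp
qed

end

end

section \<open>Finite-type Cartan matrices\<close>

lemma finite_type_cartan_kernel:
  fixes A :: "'i::finite \<Rightarrow> 'i \<Rightarrow> int" and c :: "'i \<Rightarrow> real"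
  assumes ft: "finite_type_cartan A" and h: "\<forall>j. (\<Sum>i\<in>UNIV. c i * of_int (A i j)) = 0"
  shows "c = (\<lambda>_. 0)"
proof -
  obtain d :: "'i \<Rightarrow> real" where dpos: "\<forall>i. d i > 0"
    and sym: "\<forall>i j. d i * of_int (A i j) = d j * of_int (A j i)"
    and pd: "\<forall>x :: 'i \<Rightarrow> real. x \<noteq> (\<lambda>_. 0) \<longrightarrow> (\<Sum>i\<in>UNIV. \<Sum>j\<in>UNIV. x i * d i * of_int (A i j) * x j) > 0"
    using ft unfolding finite_type_cartan_def by blast
  define y where "y i = c i / d i" for i
  have cy: "c i = d i * y i" for i using dpos unfolding y_def by (simp add: less_imp_neq[symmetric])
  have Ay: "(\<Sum>i\<in>UNIV. of_int (A j i) * y i) = 0" for j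
  proof -
    have "0 = (\<Sum>i\<in>UNIV. c i * of_int (A i j))" using h by simp
    also have "\<dots> = (\<Sum>i\<in>UNIV. y i * (d i * of_int (A i j)))" unfolding cy by (simp add: ac_simps)
    also have "\<dots> = (\<Sum>i\<in>UNIV. y i * (d j * of_int (A j i)))" using sym by simp
    also have "\<dots> = d j * (\<Sum>i\<in>UNIV. of_int (A j i) * y i)" by (simp add: sum_distrib_left ac_simps)
    finally show ?thesis using dpos by (metis mult_eq_0_iff less_irrefl)
  qed
  have "(\<Sum>i\<in>UNIV. \<Sum>j\<in>UNIV. y i * d i * of_int (A i j) * y j) = 0"
  proof -
    have "(\<Sum>i\<in>UNIV. \<Sum>j\<in>UNIV. y i * d i * of_int (A i j) * y j) =
          (\<Sum>i\<in>UNIV. y i * d i * (\<Sum>j\<in>UNIV. of_int (A i j) * y j))"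
      by (simp add: sum_distrib_left ac_simps)
    also have "\<dots> = 0" using Ay by simp
    finally show ?thesis .
  qed
  then have "y = (\<lambda>_. 0)" using pd by fastforce
  then show ?thesis using cy by (auto simp: fun_eq_iff)
qed

lemma nonsingular_system_solvable:
  fixes B :: "'i::finite \<Rightarrow> 'i \<Rightarrow> real"
  assumes inj: "\<And>c. \<forall>j. (\<Sum>i\<in>UNIV. c i * B i j) = 0 \<Longrightarrow> c = (\<lambda>_. 0)"
  shows "\<exists>x. \<forall>j. (\<Sum>i\<in>UNIV. x i * B i j) = t j"
proof -
  obtain ls :: "'i list" where ls: "distinct ls" "set ls = UNIV"
    using finite_distinct_list[OF finite_UNIV] by blast
  define n where "n = length ls"
  have bij: "bij_betw ((!) ls) {..<n} UNIV" using bij_betw_nth[OF ls(1)] ls(2) n_def by auto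
  define ix where "ix = the_inv_into {..<n} ((!) ls)"
  have ix: "ix i < n" "ls ! ix i = i" for i
    using bij_betwE[OF bij_betw_the_inv_into[OF bij]] f_the_inv_into_f_bij_betw[OF bij] unfolding ix_def by auto
  have ix_nth: "ix (ls ! k) = k" if "k < n" for k
    unfolding ix_def using the_inv_into_f_f[OF bij_betw_imp_inj_on[OF bij]] that by simp
  have sumU: "(\<Sum>i\<in>UNIV. f i) = (\<Sum>k<n. f (ls ! k))" for f :: "'i \<Rightarrow> real"
    using sum.reindex_bij_betw[OF bij, of f] by simp
  define M :: "real mat" where "M = mat n n (\<lambda>(j,k). B (ls!k) (ls!j))"
  have M: "M \<in> carrier_mat n n" unfolding M_def by simp
  have Mv: "(M *\<^sub>v v) $ ix j = (\<Sum>i\<in>UNIV. v $ ix i * B i j)" if "v \<in> carrier_vec n" for v j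
    using that ix unfolding M_def sumU
    by (auto simp: scalar_prod_def ac_simps lessThan_atLeast0 ix_nth intro!: sum.cong)
  have "det M \<noteq> 0"
  proof
    assume "det M = 0"
    then obtain v where v: "v \<in> carrier_vec n" "v \<noteq> 0\<^sub>v n" "M *\<^sub>v v = 0\<^sub>v n"
      using det_0_iff_vec_prod_zero_field[OF M] by blast
    have "(\<lambda>i. v $ ix i) = (\<lambda>_. 0)"
      by (rule inj) (use v Mv ix in \<open>metis M index_mult_mat_vec index_zero_vec(1) carrier_matD(1)\<close>)
    then have "v = 0\<^sub>v n" using v(1) ix_nth by (intro eq_vecI) (auto simp: fun_eq_iff, metis)
    with v(2) show False by simp
  qed
  define w where "w = adj_mat M *\<^sub>v vec n (\<lambda>k. t (ls!k))"
  have w: "w \<in> carrier_vec n" unfolding w_def using adj_mat(1)[OF M] by simp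
  have "M *\<^sub>v w = (M * adj_mat M) *\<^sub>v vec n (\<lambda>k. t (ls!k))"
    unfolding w_def using adj_mat(1)[OF M] M by simp
  moreover have "(\<Sum>i = 0..<n. det M * (if i = k then 1 else 0) * t (ls ! i)) = det M * t (ls ! k)"
    if "k < n" for k
    using that by (simp add: if_distrib[of "\<lambda>x. _ * x * _"] cong: if_cong)
  ultimately have Mw: "(M *\<^sub>v w) $ k = det M * t (ls ! k)" if "k < n" for k
    using that unfolding adj_mat(2)[OF M] by (simp add: scalar_prod_def)
  have "(\<Sum>i\<in>UNIV. w $ ix i / det M * B i j) = t j" for j
    using Mv[OF w, of j] Mw[OF ix(1)] ix(2) \<open>det M \<noteq> 0\<close>
    by (simp add: sum_divide_distrib[symmetric] ac_simps) (metis nonzero_mult_div_cancel_left)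
  then show ?thesis by (intro exI[of _ "\<lambda>i. w $ ix i / det M"]) simp
qed

lemma finite_type_cartan_solvable:
  fixes A :: "'i::finite \<Rightarrow> 'i \<Rightarrow> int"
  assumes "finite_type_cartan A"
  shows "\<exists>x::'i \<Rightarrow> real. \<forall>j. (\<Sum>i\<in>UNIV. x i * of_int (A i j)) = t j"
  by (rule nonsingular_system_solvable) (rule finite_type_cartan_kernel[OF assms])

context vector_space begin

lemma representation_lincomb:
  assumes fin: "finite B" and ind: "independent B"
  shows "representation B (\<Sum>b\<in>B. scale (g b) b) b0 = (if b0 \<in> B then g b0 else 0)"
proof -
  have "representation B (\<Sum>b\<in>B. scale (g b) b) = (\<lambda>b0. \<Sum>b\<in>B. representation B (scale (g b) b) b0)"
    by (rule representation_sum[OF ind]) (auto intro: span_scale span_base)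
  also have "\<dots> = (\<lambda>b0. \<Sum>b\<in>B. g b * (if b0 = b then 1 else 0))"
    by (intro ext sum.cong refl) (simp add: representation_scale[OF ind] span_base representation_basis[OF ind])
  finally show ?thesis using fin by (simp add: if_distrib[of "\<lambda>x. _ * x"] sum.delta cong: if_cong)
qed

lemma representation_expansion:
  assumes fin: "finite B" and ind: "independent B" and v: "v \<in> span B"
  shows "v = (\<Sum>b\<in>B. scale (representation B v b) b)"
  using sum_representation_eq[OF ind v fin subset_refl] by simp

lemma independent_Un_if_span_Int_zero:
  assumes A: "independent A" and B: "independent B" and AB: "span A \<inter> span B \<subseteq> {0}"
  shows "independent (A \<union> B)"
proof
  assume "dependent (A \<union> B)"
  then obtain t u where t: "finite t" "t \<subseteq> A \<union> B" and s0: "(\<Sum>v\<in>t. scale (u v) v) = 0"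
    and ex: "\<exists>v\<in>t. u v \<noteq> 0"
    unfolding dependent_explicit by blast
  have "A \<inter> B = {}"
  proof (rule ccontr)
    assume "A \<inter> B \<noteq> {}"
    then obtain x where "x \<in> A" "x \<in> B" by blast
    then have "x \<in> span A \<inter> span B" by (simp add: span_base)
    then have "x = 0" using AB by blast
    with \<open>x \<in> A\<close> A show False using dependent_zero by blast
  qed
  define sA where "sA = (\<Sum>v\<in>t \<inter> A. scale (u v) v)"
  define sB where "sB = (\<Sum>v\<in>t \<inter> B. scale (u v) v)"
  have "sA + sB = (\<Sum>v\<in>(t \<inter> A) \<union> (t \<inter> B). scale (u v) v)"
    unfolding sA_def sB_def by (rule sum.union_disjoint[symmetric]) (use t \<open>A \<inter> B = {}\<close> in auto)
  also have "(t \<inter> A) \<union> (t \<inter> B) = t" using t by auto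
  finally have "sA + sB = 0" using s0 by simp
  then have sB: "sB = - sA" by (simp add: eq_neg_iff_add_eq_0 add.commute)
  have "sA \<in> span A" "sB \<in> span B" unfolding sA_def sB_def by (auto intro: span_sum span_scale span_base)
  then have "sB \<in> span A \<inter> span B" unfolding sB by (simp add: span_neg)
  then have "sB = 0" using AB by blast
  then have "sA = 0" "sB = 0" using sB by simp_all
  then have "u v = 0" if "v \<in> t" for v
    using independentD[OF A _ _ _, of "t \<inter> A" u v] independentD[OF B _ _ _, of "t \<inter> B" u v] t that
    unfolding sA_def sB_def by blast
  with ex show False by blast
qed

end


lemma mat_delete_eq_rows:
  assumes A: "A \<in> carrier_mat n n" and B: "B \<in> carrier_mat n n" and i: "i < n"
    and rows: "\<And>r j. r < n \<Longrightarrow> j < n \<Longrightarrow> r \<noteq> i \<Longrightarrow> A $$ (r,j) = B $$ (r,j)"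
  shows "mat_delete A i j = mat_delete B i j"
  by (rule eq_matI) (use A B i rows in \<open>auto simp: mat_delete_def\<close>)

lemma cofactor_eq_rows:
  assumes A: "A \<in> carrier_mat n n" and B: "B \<in> carrier_mat n n" and i: "i < n"
    and rows: "\<And>r j. r < n \<Longrightarrow> j < n \<Longrightarrow> r \<noteq> i \<Longrightarrow> A $$ (r,j) = B $$ (r,j)"
  shows "cofactor A i j = cofactor B i j"
  unfolding cofactor_def using mat_delete_eq_rows[OF A B i rows] by simp

lemma det_row_linear:
  fixes A B C :: "'a::comm_ring_1 mat"
  assumes A: "A \<in> carrier_mat n n" and B: "B \<in> carrier_mat n n" and C: "C \<in> carrier_mat n n" and i: "i < n"
    and rB: "\<And>r j. r < n \<Longrightarrow> j < n \<Longrightarrow> r \<noteq> i \<Longrightarrow> B $$ (r,j) = A $$ (r,j)"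
    and rC: "\<And>r j. r < n \<Longrightarrow> j < n \<Longrightarrow> r \<noteq> i \<Longrightarrow> C $$ (r,j) = A $$ (r,j)"
    and ri: "\<And>j. j < n \<Longrightarrow> A $$ (i,j) = a * B $$ (i,j) + C $$ (i,j)"
  shows "det A = a * det B + det C"
proof -
  have cB: "cofactor B i j = cofactor A i j" for j by (rule cofactor_eq_rows[OF B A i rB])
  have cC: "cofactor C i j = cofactor A i j" for j by (rule cofactor_eq_rows[OF C A i rC])
  have "det A = (\<Sum>j<n. A $$ (i,j) * cofactor A i j)" by (rule laplace_expansion_row[OF A i])
  also have "\<dots> = (\<Sum>j<n. a * (B $$ (i,j) * cofactor B i j) + C $$ (i,j) * cofactor C i j)"
    by (rule sum.cong) (auto simp: ri cB cC algebra_simps)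
  also have "\<dots> = a * det B + det C"
    by (simp add: sum.distrib sum_distrib_left laplace_expansion_row[OF B i] laplace_expansion_row[OF C i])
  finally show ?thesis .
qed

lemma det_row_zero:
  fixes A :: "'a::comm_ring_1 mat"
  assumes A: "A \<in> carrier_mat n n" and i: "i < n" and z: "\<And>j. j < n \<Longrightarrow> A $$ (i,j) = 0"
  shows "det A = 0"
  using laplace_expansion_row[OF A i] z by simp

text \<open>Jacobi's formula for the derivative of the determinant, in the direction \<open>M \<mapsto> M T\<close>.\<close>

lemma sum_det_row_derivation:
  fixes M :: "'a::comm_ring_1 mat"
  assumes M: "M \<in> carrier_mat n n"
  shows "(\<Sum>i<n. det (mat n n (\<lambda>(r,m). if r = i then (\<Sum>l<n. M $$ (i,l) * T l m) else M $$ (r,m))))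
        = det M * (\<Sum>l<n. T l l)"
proof -
  let ?Mi = "\<lambda>i. mat n n (\<lambda>(r,m). if r = i then (\<Sum>l<n. M $$ (i,l) * T l m) else M $$ (r,m))"
  have Mi: "?Mi i \<in> carrier_mat n n" for i by simp
  have di: "det (?Mi i) = (\<Sum>m<n. (\<Sum>l<n. M $$ (i,l) * T l m) * cofactor M i m)" if i: "i < n" for i
  proof -
    have "det (?Mi i) = (\<Sum>m<n. ?Mi i $$ (i,m) * cofactor (?Mi i) i m)"
      by (rule laplace_expansion_row[OF Mi i])
    also have "\<dots> = (\<Sum>m<n. (\<Sum>l<n. M $$ (i,l) * T l m) * cofactor M i m)"
      by (rule sum.cong[OF refl]) (use i M cofactor_eq_rows[OF Mi M i] in auto)
    finally show ?thesis .
  qed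
  have adj: "(\<Sum>i<n. cofactor M i m * M $$ (i,l)) = (if m = l then det M else 0)" if "m < n" "l < n" for m l
  proof -
    have "(adj_mat M * M) $$ (m,l) = (\<Sum>i<n. cofactor M i m * M $$ (i,l))"
      using M that unfolding adj_mat_def times_mat_def scalar_prod_def
      by (auto simp: lessThan_atLeast0 intro!: sum.cong)
    then show ?thesis using adj_mat(3)[OF M] that by (cases "m = l") simp_all
  qed
  have "(\<Sum>i<n. det (?Mi i)) = (\<Sum>i<n. \<Sum>m<n. \<Sum>l<n. T l m * (cofactor M i m * M $$ (i,l)))"
  proof (rule sum.cong[OF refl])
    fix i assume "i \<in> {..<n}"
    then have "det (?Mi i) = (\<Sum>m<n. (\<Sum>l<n. M $$ (i,l) * T l m) * cofactor M i m)" using di by simp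
    also have "\<dots> = (\<Sum>m<n. \<Sum>l<n. T l m * (cofactor M i m * M $$ (i,l)))"
      by (rule sum.cong[OF refl], subst sum_distrib_right, rule sum.cong[OF refl]) (simp add: mult_ac)
    finally show "det (?Mi i) = (\<Sum>m<n. \<Sum>l<n. T l m * (cofactor M i m * M $$ (i,l)))" .
  qed
  also have "\<dots> = (\<Sum>m<n. \<Sum>i<n. \<Sum>l<n. T l m * (cofactor M i m * M $$ (i,l)))"
    by (rule sum.swap)
  also have "\<dots> = (\<Sum>m<n. \<Sum>l<n. \<Sum>i<n. T l m * (cofactor M i m * M $$ (i,l)))"
    by (rule sum.cong[OF refl], rule sum.swap)
  also have "\<dots> = (\<Sum>m<n. \<Sum>l<n. T l m * (\<Sum>i<n. cofactor M i m * M $$ (i,l)))"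
    by (simp add: sum_distrib_left)
  also have "\<dots> = (\<Sum>m<n. \<Sum>l<n. T l m * (if m = l then det M else 0))"
    by (rule sum.cong[OF refl], rule sum.cong[OF refl]) (simp add: adj)
  also have "\<dots> = (\<Sum>m<n. T m m * det M)"
    by (rule sum.cong[OF refl]) (simp add: if_distrib[of "\<lambda>x. _ * x"] sum.delta cong: if_cong)
  finally show ?thesis by (simp add: sum_distrib_left mult.commute)
qed

section \<open>The parabolic subalgebra and its grading\<close>

locale parabolic_setting = complex_lie_algebra sc br for sc :: "complex \<Rightarrow> 'a::ab_group_add \<Rightarrow> 'a" and br +
  fixes A :: "'i::finite \<Rightarrow> 'i \<Rightarrow> int" and e f h :: "'i \<Rightarrow> 'a" and S :: "'i set"
  assumes finite_type: "finite_type_cartan A" and chevalley: "chevalley_realization A sc br e f h"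
    and S_proper: "S \<noteq> UNIV"
begin

definition "pS = lie_gen sc br (range e \<union> f ` S)"
definition "gS = lie_gen sc br (e ` S \<union> f ` S)"

lemma br_h_e: "br (h i) (e j) = sc (of_int (A i j)) (e j)"
  and br_h_f: "br (h i) (f j) = sc (of_int (- A i j)) (f j)"
  and br_e_f: "br (e i) (f i) = h i"
  and independent_h: "independent (range h)"
  and finite_dim: "\<exists>B. finite B \<and> span B = UNIV"
  using chevalley unfolding chevalley_realization_def by blast+

lemma cartan_diag: "A i i = 2" using finite_type unfolding finite_type_cartan_def by blast

lemma pS_subspace: "subspace pS" unfolding pS_def by (rule lie_gen_subspace)
lemma gS_subspace: "subspace gS" unfolding gS_def by (rule lie_gen_subspace)
lemma gS_subset_pS: "gS \<subseteq> pS" unfolding gS_def pS_def by (rule lie_gen_mono) auto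
lemma pS_br: "x \<in> pS \<Longrightarrow> y \<in> pS \<Longrightarrow> br x y \<in> pS" unfolding pS_def by (rule lie_gen_br)
lemma gS_br: "x \<in> gS \<Longrightarrow> y \<in> gS \<Longrightarrow> br x y \<in> gS" unfolding gS_def by (rule lie_gen_br)

sublocale pair: lie_subalgebra_pair sc br pS gS
  by unfold_locales (use pS_subspace pS_br gS_subset_pS in auto)

definition grading_weight :: "'i \<Rightarrow> real" where "grading_weight j = (if j \<in> S then 0 else 1)"

definition grading_coeffs :: "'i \<Rightarrow> real" where
  "grading_coeffs = (SOME x. \<forall>j. (\<Sum>i\<in>UNIV. x i * of_int (A i j)) = grading_weight j)"

lemma grading_coeffs: "(\<Sum>i\<in>UNIV. grading_coeffs i * of_int (A i j)) = grading_weight j"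
  using someI_ex[OF finite_type_cartan_solvable[OF finite_type, of grading_weight]] unfolding grading_coeffs_def by blast

definition "grading_element = (\<Sum>i\<in>UNIV. sc (complex_of_real (grading_coeffs i)) (h i))"

definition "ad_grading x = br grading_element x"

lemma ad_grading_eigenvector:
  assumes "\<And>i. br (h i) v = sc (of_int (c i)) v"
  shows "ad_grading v = sc (of_real (\<Sum>i\<in>UNIV. grading_coeffs i * of_int (c i))) v"
  unfolding ad_grading_def grading_element_def br_sum_left
  by (simp add: br_scale_left assms scale_scale scale_sum_left)

lemma ad_grading_e: "ad_grading (e j) = sc (of_real (grading_weight j)) (e j)"
  using ad_grading_eigenvector[of "e j" "\<lambda>i. A i j"] br_h_e grading_coeffs by simp

lemma ad_grading_f: "ad_grading (f j) = sc (- of_real (grading_weight j)) (f j)"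
  using ad_grading_eigenvector[of "f j" "\<lambda>i. - A i j"] br_h_f grading_coeffs by (simp add: sum_negf)

lemma ad_grading_add: "ad_grading (x + y) = ad_grading x + ad_grading y"
  unfolding ad_grading_def by (rule br_add_right)

lemma ad_grading_scale: "ad_grading (sc a x) = sc a (ad_grading x)"
  unfolding ad_grading_def by (rule br_scale_right)

lemma ad_grading_sum: "ad_grading (\<Sum>t\<in>T. g t) = (\<Sum>t\<in>T. ad_grading (g t))"
  unfolding ad_grading_def by (rule br_sum_right)

lemma ad_grading_br: "ad_grading (br x y) = br (ad_grading x) y + br x (ad_grading y)"
  unfolding ad_grading_def by (rule br_leibniz)

lemma ad_grading_gS: "k \<in> gS \<Longrightarrow> ad_grading k = 0"
  unfolding gS_def
proof (induction rule: lie_gen.induct)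
  case (gen x)
  then show ?case using ad_grading_e ad_grading_f by (auto simp: grading_weight_def)
next
  case zero then show ?case by (simp add: ad_grading_def)
next
  case (add x y) then show ?case by (simp add: ad_grading_add)
next
  case (smult x a) then show ?case by (simp add: ad_grading_scale)
next
  case (bracket x y) then show ?case by (simp add: ad_grading_br)
qed

text \<open>The span of these eigenvectors is the nilradical u of p_S.\<close>

definition "pos_weight_vectors = {x\<in>pS. \<exists>d::nat. 1 \<le> d \<and> ad_grading x = sc (of_nat d) x}"

lemma pos_weight_vectors_pS: "pos_weight_vectors \<subseteq> pS" unfolding pos_weight_vectors_def by auto

lemma span_pos_weight_vectors_pS: "span pos_weight_vectors \<subseteq> pS" by (rule span_minimal[OF pos_weight_vectors_pS pS_subspace])

lemma br_gS_span_pos: assumes k: "k \<in> gS" and v: "v \<in> span pos_weight_vectors" shows "br k v \<in> span pos_weight_vectors"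
  using v
proof (induction rule: span_induct_alt)
  case base then show ?case by (simp add: span_zero)
next
  case (step a x y)
  then obtain d where d: "1 \<le> d" "ad_grading x = sc (of_nat d) x" "x \<in> pS" unfolding pos_weight_vectors_def by auto
  have "br k x \<in> pos_weight_vectors"
    unfolding pos_weight_vectors_def using d k gS_subset_pS pS_br ad_grading_gS[OF k]
    by (auto simp: ad_grading_br br_scale_right intro!: exI[of _ d])
  then have "br k (sc a x) \<in> span pos_weight_vectors" by (simp add: br_scale_right span_base span_scale)
  then show ?case using step by (simp add: br_add_right span_add)
qed

lemma br_pos_span_pos: assumes x: "x \<in> pos_weight_vectors" and w: "w \<in> span pos_weight_vectors" shows "br x w \<in> span pos_weight_vectors"
  using w
proof (induction rule: span_induct_alt)
  case base then show ?case by (simp add: span_zero)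
next
  case (step a z y)
  obtain d where d: "1 \<le> d" "ad_grading x = sc (of_nat d) x" "x \<in> pS" using x unfolding pos_weight_vectors_def by auto
  obtain d' where d': "1 \<le> d'" "ad_grading z = sc (of_nat d') z" "z \<in> pS" using step unfolding pos_weight_vectors_def by auto
  have "br x z \<in> pos_weight_vectors"
    unfolding pos_weight_vectors_def using d d' pS_br
    by (auto simp: ad_grading_br br_scale_right br_scale_left scale_left_distrib[symmetric] intro!: exI[of _ "d + d'"])
  then have "br x (sc a z) \<in> span pos_weight_vectors" by (simp add: br_scale_right span_base span_scale)
  then show ?case using step by (simp add: br_add_right span_add)
qed

lemma br_span_pos: assumes v: "v \<in> span pos_weight_vectors" and w: "w \<in> span pos_weight_vectors" shows "br v w \<in> span pos_weight_vectors"
  using v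
proof (induction rule: span_induct_alt)
  case base then show ?case by (simp add: span_zero)
next
  case (step a x y)
  have "br x w \<in> span pos_weight_vectors" by (rule br_pos_span_pos[OF step(1) w])
  then have "br (sc a x) w \<in> span pos_weight_vectors" by (simp add: br_scale_left span_scale)
  then show ?case using step by (simp add: br_add_left span_add)
qed

lemma pS_decomp: "x \<in> pS \<Longrightarrow> \<exists>k v. k \<in> gS \<and> v \<in> span pos_weight_vectors \<and> x = k + v"
  unfolding pS_def
proof (induction rule: lie_gen.induct)
  case (gen x)
  show ?case
  proof (cases "x \<in> e ` S \<union> f ` S")
    case True
    then have "x \<in> gS" unfolding gS_def by (auto intro: lie_gen.gen)
    then show ?thesis by (intro exI[of _ x] exI[of _ 0]) (auto simp: span_zero)
  next
    case False
    then obtain j where j: "x = e j" "j \<notin> S" using gen by auto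
    have "x \<in> pos_weight_vectors" unfolding pos_weight_vectors_def pS_def using j ad_grading_e
      by (auto simp: grading_weight_def intro!: lie_gen.gen exI[of _ 1])
    then show ?thesis using gS_subspace subspace_0
      by (intro exI[of _ 0] exI[of _ x]) (auto simp: span_base)
  qed
next
  case zero then show ?case using gS_subspace subspace_0 by (intro exI[of _ 0] exI[of _ 0]) (auto simp: span_zero)
next
  case (add x y)
  then obtain k1 v1 k2 v2 where "k1 \<in> gS" "v1 \<in> span pos_weight_vectors" "x = k1 + v1"
    "k2 \<in> gS" "v2 \<in> span pos_weight_vectors" "y = k2 + v2"
    by blast
  then show ?case using gS_subspace
    by (intro exI[of _ "k1 + k2"] exI[of _ "v1 + v2"]) (auto simp: span_add subspace_add algebra_simps)
next
  case (smult x a)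
  then obtain k1 v1 where "k1 \<in> gS" "v1 \<in> span pos_weight_vectors" "x = k1 + v1" by blast
  then show ?case using gS_subspace
    by (intro exI[of _ "sc a k1"] exI[of _ "sc a v1"]) (auto simp: span_scale subspace_scale scale_right_distrib)
next
  case (bracket x y)
  then obtain k1 v1 k2 v2 where kv: "k1 \<in> gS" "v1 \<in> span pos_weight_vectors" "x = k1 + v1"
    "k2 \<in> gS" "v2 \<in> span pos_weight_vectors" "y = k2 + v2"
    by blast
  have "br x y = br k1 k2 + (br k1 v2 + (- br k2 v1) + br v1 v2)"
    unfolding kv(3,6) by (simp add: br_add_left br_add_right br_antisym[of v1 k2] algebra_simps)
  moreover have "br k1 k2 \<in> gS" using kv gS_br by auto
  moreover have "br k1 v2 + (- br k2 v1) + br v1 v2 \<in> span pos_weight_vectors"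
    by (intro span_add span_neg br_gS_span_pos br_span_pos) (use kv in auto)
  ultimately show ?case by blast
qed


lemma independent_finite: "independent X \<Longrightarrow> finite X"
  using finite_dim independent_span_bound by blast

definition "u_basis = (SOME B. B \<subseteq> pos_weight_vectors \<and> independent B \<and> pos_weight_vectors \<subseteq> span B)"
definition "gS_basis = (SOME B. B \<subseteq> gS \<and> independent B \<and> gS \<subseteq> span B)"

lemma u_basis: "u_basis \<subseteq> pos_weight_vectors" "independent u_basis" "pos_weight_vectors \<subseteq> span u_basis"
proof -
  obtain B where "B \<subseteq> pos_weight_vectors" "independent B" "pos_weight_vectors \<subseteq> span B" by (rule maximal_independent_subset)
  then have "\<exists>B. B \<subseteq> pos_weight_vectors \<and> independent B \<and> pos_weight_vectors \<subseteq> span B" by blast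
  from someI_ex[OF this]
  show "u_basis \<subseteq> pos_weight_vectors" "independent u_basis" "pos_weight_vectors \<subseteq> span u_basis"
    unfolding u_basis_def by blast+
qed

lemma gS_basis: "gS_basis \<subseteq> gS" "independent gS_basis" "gS \<subseteq> span gS_basis"
proof -
  obtain B where "B \<subseteq> gS" "independent B" "gS \<subseteq> span B" by (rule maximal_independent_subset)
  then have "\<exists>B. B \<subseteq> gS \<and> independent B \<and> gS \<subseteq> span B" by blast
  from someI_ex[OF this] show "gS_basis \<subseteq> gS" "independent gS_basis" "gS \<subseteq> span gS_basis" unfolding gS_basis_def by blast+
qed

lemma finite_u_basis: "finite u_basis" using independent_finite u_basis(2) .
lemma finite_gS_basis: "finite gS_basis" using independent_finite gS_basis(2) .

lemma span_u_basis: "span u_basis = span pos_weight_vectors"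
proof
  show "span u_basis \<subseteq> span pos_weight_vectors" using u_basis(1) by (rule span_mono)
  show "span pos_weight_vectors \<subseteq> span u_basis" using u_basis(3) span_minimal subspace_span by blast
qed

lemma span_gS_basis: "span gS_basis \<subseteq> gS" using gS_basis(1) gS_subspace span_minimal by blast

definition weight :: "'a \<Rightarrow> nat" where "weight b = (SOME d. 1 \<le> d \<and> ad_grading b = sc (of_nat d) b)"

lemma weight: "b \<in> pos_weight_vectors \<Longrightarrow> 1 \<le> weight b \<and> ad_grading b = sc (of_nat (weight b)) b"
  unfolding weight_def pos_weight_vectors_def by (rule someI_ex) auto

lemma representation_ad_grading:
  assumes v: "v \<in> span u_basis"
  shows "representation u_basis (ad_grading v) b0 = of_nat (weight b0) * representation u_basis v b0"
proof -
  let ?r = "representation u_basis v"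
  have "ad_grading v = ad_grading (\<Sum>b\<in>u_basis. sc (?r b) b)" using representation_expansion[OF finite_u_basis u_basis(2) v] by simp
  also have "\<dots> = (\<Sum>b\<in>u_basis. sc (?r b * of_nat (weight b)) b)"
    unfolding ad_grading_sum ad_grading_scale by (rule sum.cong) (use weight u_basis(1) in \<open>auto simp: scale_scale\<close>)
  finally have "representation u_basis (ad_grading v) b0 = (if b0 \<in> u_basis then ?r b0 * of_nat (weight b0) else 0)"
    using representation_lincomb[OF finite_u_basis u_basis(2)] by simp
  then show ?thesis using representation_ne_zero[of u_basis v b0] by (auto simp: mult.commute)
qed

lemma weight_eq_eigenvalue:
  assumes v: "v \<in> span u_basis" and ev: "ad_grading v = sc lam v" and nz: "representation u_basis v b0 \<noteq> 0"
  shows "of_nat (weight b0) = lam"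
proof -
  have "representation u_basis (ad_grading v) b0 = lam * representation u_basis v b0"
    unfolding ev by (simp add: representation_scale[OF u_basis(2) v])
  then show ?thesis using representation_ad_grading[OF v, of b0] nz by simp
qed

lemma gS_inter_span_u_basis: assumes "v \<in> gS" "v \<in> span u_basis" shows "v = 0"
proof -
  have D0: "ad_grading v = sc 0 v" using ad_grading_gS[OF assms(1)] by simp
  have "representation u_basis v b = 0" for b
  proof (rule ccontr)
    assume nz: "representation u_basis v b \<noteq> 0"
    then have "b \<in> u_basis" using representation_ne_zero by blast
    then have "1 \<le> weight b" using weight u_basis(1) by auto
    moreover have "of_nat (weight b) = (0::complex)" by (rule weight_eq_eigenvalue[OF assms(2) D0 nz])
    ultimately show False by simp
  qed
  then show ?thesis using representation_expansion[OF finite_u_basis u_basis(2) assms(2)] by simp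
qed

lemma gS_basis_u_basis_disjoint: "gS_basis \<inter> u_basis = {}"
proof -
  { fix x assume "x \<in> gS_basis" "x \<in> u_basis"
    then have "x \<in> gS" "x \<in> span u_basis" using gS_basis(1) span_base by auto
    then have "x = 0" by (rule gS_inter_span_u_basis)
    with \<open>x \<in> u_basis\<close> u_basis(2) dependent_zero have False by blast }
  then show ?thesis by blast
qed

definition "pS_basis = gS_basis \<union> u_basis"

lemma independent_pS_basis: "independent pS_basis"
  unfolding pS_basis_def
proof (rule independent_Un_if_span_Int_zero[OF gS_basis(2) u_basis(2)])
  show "span gS_basis \<inter> span u_basis \<subseteq> {0}"
    using span_gS_basis gS_inter_span_u_basis by auto
qed

lemma pS_subset_span_pS_basis: "pS \<subseteq> span pS_basis"
proof
  fix x assume "x \<in> pS"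
  then obtain k v where kv: "k \<in> gS" "v \<in> span pos_weight_vectors" "x = k + v" using pS_decomp by blast
  have "k \<in> span pS_basis" using kv gS_basis(3) span_mono[of gS_basis pS_basis] unfolding pS_basis_def by auto
  moreover have "v \<in> span pS_basis" using kv span_u_basis span_mono[of u_basis pS_basis] unfolding pS_basis_def by auto
  ultimately show "x \<in> span pS_basis" using kv span_add by simp
qed

definition u_list :: "'a list" where "u_list = (SOME l. distinct l \<and> set l = u_basis)"

lemma u_list: "distinct u_list" "set u_list = u_basis"
proof -
  have "\<exists>l. distinct l \<and> set l = u_basis" using finite_distinct_list[OF finite_u_basis] by blast
  from someI_ex[OF this] show "distinct u_list" "set u_list = u_basis" unfolding u_list_def by blast+
qed

definition "dim_u = length u_list"

lemma u_list_nth: "l < dim_u \<Longrightarrow> u_list ! l \<in> u_basis" unfolding dim_u_def using u_list(2) nth_mem by blast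

lemma u_list_pS: "l < dim_u \<Longrightarrow> u_list ! l \<in> pS" using u_list_nth u_basis(1) pos_weight_vectors_pS by blast

definition u_coord :: "'a \<Rightarrow> nat \<Rightarrow> complex" where "u_coord v m = representation pS_basis v (u_list ! m)"

lemma in_span_pS_basis: "v \<in> pS \<Longrightarrow> v \<in> span pS_basis" using pS_subset_span_pS_basis by blast

lemma u_coord_linear: "v \<in> pS \<Longrightarrow> w \<in> pS \<Longrightarrow> u_coord (sc a v + w) m = a * u_coord v m + u_coord w m"
  unfolding u_coord_def
  by (simp add: representation_add[OF independent_pS_basis] representation_scale[OF independent_pS_basis] span_scale in_span_pS_basis)

lemma u_coord_diff: "v \<in> pS \<Longrightarrow> w \<in> pS \<Longrightarrow> u_coord (v - w) m = u_coord v m - u_coord w m"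
  unfolding u_coord_def by (simp add: representation_diff[OF independent_pS_basis] in_span_pS_basis)

lemma u_coord_zero: "u_coord 0 m = 0"
  unfolding u_coord_def by (simp add: representation_zero)

lemma u_coord_sum: "(\<And>t. t \<in> T \<Longrightarrow> g t \<in> pS) \<Longrightarrow> u_coord (\<Sum>t\<in>T. g t) m = (\<Sum>t\<in>T. u_coord (g t) m)"
  unfolding u_coord_def by (subst representation_sum[OF independent_pS_basis]) (auto simp: in_span_pS_basis)

lemma u_coord_scale: "v \<in> pS \<Longrightarrow> u_coord (sc a v) m = a * u_coord v m"
  unfolding u_coord_def by (simp add: representation_scale[OF independent_pS_basis] in_span_pS_basis)

lemma u_coord_gS: assumes k: "k \<in> gS" and m: "m < dim_u" shows "u_coord k m = 0"
proof -
  have ks: "k \<in> span gS_basis" using k gS_basis(3) by blast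
  have "representation pS_basis k = representation gS_basis k"
    by (rule representation_extend[OF independent_pS_basis ks]) (auto simp: pS_basis_def)
  moreover have "representation gS_basis k (u_list ! m) = 0"
    using representation_ne_zero[of gS_basis k "u_list ! m"] u_list_nth[OF m] gS_basis_u_basis_disjoint by blast
  ultimately show ?thesis unfolding u_coord_def by simp
qed

lemma u_coord_u_list: assumes "l < dim_u" "m < dim_u" shows "u_coord (u_list ! l) m = (if l = m then 1 else 0)"
proof -
  have "u_list ! l \<in> pS_basis" using u_list_nth[OF assms(1)] pS_basis_def by auto
  then have "representation pS_basis (u_list ! l) = (\<lambda>v. if v = u_list ! l then 1 else 0)"
    by (rule representation_basis[OF independent_pS_basis])
  moreover have "u_list ! m = u_list ! l \<longleftrightarrow> l = m" using u_list(1) assms unfolding dim_u_def by (auto simp: nth_eq_iff_index_eq)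
  ultimately show ?thesis unfolding u_coord_def by auto
qed

lemma u_coord_span_u: assumes v: "v \<in> span u_basis" shows "u_coord v m = representation u_basis v (u_list ! m)"
proof -
  have "representation pS_basis v = representation u_basis v"
    by (rule representation_extend[OF independent_pS_basis v]) (auto simp: pS_basis_def)
  then show ?thesis unfolding u_coord_def by simp
qed

lemma sum_u_basis: "(\<Sum>b\<in>u_basis. g b) = (\<Sum>l<dim_u. g (u_list ! l))"
proof -
  have "bij_betw ((!) u_list) {..<dim_u} u_basis" using bij_betw_nth[OF u_list(1)] u_list(2) dim_u_def by auto
  from sum.reindex_bij_betw[OF this, of g] show ?thesis by simp
qed

lemma u_list_expansion: assumes v: "v \<in> span u_basis" shows "v = (\<Sum>l<dim_u. sc (u_coord v l) (u_list ! l))"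
proof -
  have "v = (\<Sum>b\<in>u_basis. sc (representation u_basis v b) b)" by (rule representation_expansion[OF finite_u_basis u_basis(2) v])
  also have "\<dots> = (\<Sum>l<dim_u. sc (u_coord v l) (u_list ! l))" unfolding sum_u_basis u_coord_span_u[OF v] ..
  finally show ?thesis .
qed

lemma pS_decomp_coord: assumes v: "v \<in> pS" shows "\<exists>k\<in>gS. v = k + (\<Sum>l<dim_u. sc (u_coord v l) (u_list ! l))"
proof -
  obtain k w where kw: "k \<in> gS" "w \<in> span pos_weight_vectors" "v = k + w" using pS_decomp[OF v] by blast
  have w: "w \<in> span u_basis" using kw span_u_basis by simp
  have wP: "w \<in> pS" using kw span_pos_weight_vectors_pS by blast
  have kP: "k \<in> pS" using kw gS_subset_pS by blast
  have "u_coord v l = u_coord w l" if "l < dim_u" for l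
    using u_coord_linear[OF kP wP, of 1 l] u_coord_gS[OF kw(1) that] kw by simp
  then have "(\<Sum>l<dim_u. sc (u_coord v l) (u_list ! l)) = w" using u_list_expansion[OF w] by simp
  then show ?thesis using kw by blast
qed

section \<open>The top-degree cocycle\<close>

definition coord_mat :: "'a list \<Rightarrow> complex mat" where
  "coord_mat xs = mat dim_u dim_u (\<lambda>(i,m). u_coord (xs ! i) m)"

definition top_cochain :: "'a list \<Rightarrow> complex" where "top_cochain xs = det (coord_mat xs)"

lemma coord_mat_carrier: "coord_mat xs \<in> carrier_mat dim_u dim_u" unfolding coord_mat_def by simp

definition ad_coord :: "'a \<Rightarrow> nat \<Rightarrow> nat \<Rightarrow> complex" where "ad_coord y l m = u_coord (br y (u_list ! l)) m"

lemma u_coord_br: assumes y: "y \<in> gS" and x: "x \<in> pS" and m: "m < dim_u"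
  shows "u_coord (br y x) m = (\<Sum>l<dim_u. u_coord x l * ad_coord y l m)"
proof -
  obtain k where k: "k \<in> gS" "x = k + (\<Sum>l<dim_u. sc (u_coord x l) (u_list ! l))" using pS_decomp_coord[OF x] by blast
  have yP: "y \<in> pS" using y gS_subset_pS by blast
  have bP: "br y (u_list ! l) \<in> pS" if "l < dim_u" for l using pS_br[OF yP u_list_pS[OF that]] .
  have "br y x = br y k + (\<Sum>l<dim_u. sc (u_coord x l) (br y (u_list ! l)))"
    by (subst k(2)) (simp add: br_add_right br_sum_right br_scale_right)
  moreover have "br y k \<in> gS" using gS_br y k by blast
  moreover have "(\<Sum>l<dim_u. sc (u_coord x l) (br y (u_list ! l))) \<in> pS"
    using bP by (auto intro!: subspace_sum[OF pS_subspace] subspace_scale[OF pS_subspace])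
  ultimately have "u_coord (br y x) m = u_coord (br y k) m + u_coord (\<Sum>l<dim_u. sc (u_coord x l) (br y (u_list ! l))) m"
    using u_coord_linear[of "br y k" _ 1 m] gS_subset_pS by auto
  also have "u_coord (br y k) m = 0" using u_coord_gS m \<open>br y k \<in> gS\<close> by blast
  also have "u_coord (\<Sum>l<dim_u. sc (u_coord x l) (br y (u_list ! l))) m = (\<Sum>l<dim_u. u_coord x l * ad_coord y l m)"
    by (subst u_coord_sum) (use bP pS_subspace subspace_scale in \<open>auto simp: u_coord_scale ad_coord_def\<close>)
  finally show ?thesis by simp
qed

definition trace_u :: "'a \<Rightarrow> complex" where "trace_u y = (\<Sum>l<dim_u. ad_coord y l l)"

lemma br_u_list_pS: "y \<in> pS \<Longrightarrow> l < dim_u \<Longrightarrow> br y (u_list ! l) \<in> pS" using pS_br u_list_pS by blast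

lemma trace_u_linear: assumes "y \<in> pS" "z \<in> pS" shows "trace_u (sc a y + z) = a * trace_u y + trace_u z"
proof -
  have "ad_coord (sc a y + z) l l = a * ad_coord y l l + ad_coord z l l" if "l < dim_u" for l
    unfolding ad_coord_def br_add_left br_scale_left using u_coord_linear br_u_list_pS assms that by blast
  then show ?thesis unfolding trace_u_def by (simp add: sum.distrib sum_distrib_left)
qed

lemma trace_u_zero: "trace_u 0 = 0" unfolding trace_u_def ad_coord_def by (simp add: u_coord_zero)

lemma trace_u_br: assumes a: "a \<in> gS" and b: "b \<in> gS" shows "trace_u (br a b) = 0"
proof -
  have aP: "a \<in> pS" and bP: "b \<in> pS" using a b gS_subset_pS by auto
  have T: "ad_coord (br a b) l l = (\<Sum>s<dim_u. ad_coord b l s * ad_coord a s l) - (\<Sum>s<dim_u. ad_coord a l s * ad_coord b s l)"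
    if l: "l < dim_u" for l
  proof -
    let ?v = "u_list ! l"
    have vP: "?v \<in> pS" using u_list_pS l .
    have "ad_coord (br a b) l l = u_coord (br a (br b ?v) - br b (br a ?v)) l"
      unfolding ad_coord_def jacobi_ad ..
    also have "\<dots> = u_coord (br a (br b ?v)) l - u_coord (br b (br a ?v)) l"
      by (rule u_coord_diff) (use aP bP vP pS_br in auto)
    also have "u_coord (br a (br b ?v)) l = (\<Sum>s<dim_u. u_coord (br b ?v) s * ad_coord a s l)"
      by (rule u_coord_br[OF a _ l]) (use bP vP pS_br in auto)
    also have "u_coord (br b (br a ?v)) l = (\<Sum>s<dim_u. u_coord (br a ?v) s * ad_coord b s l)"
      by (rule u_coord_br[OF b _ l]) (use aP vP pS_br in auto)
    finally show ?thesis unfolding ad_coord_def .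
  qed
  have "trace_u (br a b) = (\<Sum>l<dim_u. \<Sum>s<dim_u. ad_coord b l s * ad_coord a s l)
      - (\<Sum>l<dim_u. \<Sum>s<dim_u. ad_coord a l s * ad_coord b s l)"
    unfolding trace_u_def by (simp add: T sum_subtractf)
  also have "(\<Sum>l<dim_u. \<Sum>s<dim_u. ad_coord a l s * ad_coord b s l) = (\<Sum>s<dim_u. \<Sum>l<dim_u. ad_coord a l s * ad_coord b s l)"
    by (rule sum.swap)
  also have "\<dots> = (\<Sum>l<dim_u. \<Sum>s<dim_u. ad_coord b l s * ad_coord a s l)"
    by (simp add: mult.commute)
  finally show ?thesis by simp
qed

lemma gS_span_brackets: "gS \<subseteq> span {br a b | a b. a \<in> gS \<and> b \<in> gS}"
proof
  fix x assume "x \<in> gS"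
  then show "x \<in> span {br a b | a b. a \<in> gS \<and> b \<in> gS}"
  proof -
    assume x: "x \<in> gS"
    have gK: "e j \<in> gS" "f j \<in> gS" if "j \<in> S" for j using that unfolding gS_def by (auto intro: lie_gen.gen)
    show ?thesis using x[unfolded gS_def]
    proof (induction rule: lie_gen.induct)
      case (gen x)
      then obtain j where j: "j \<in> S" "x = e j \<or> x = f j" by auto
      have hK: "h j \<in> gS" using br_e_f[of j] gS_br gK[OF j(1)] by metis
      have "x = br (sc (if x = e j then 1/2 else -1/2) (h j)) x \<and> sc (if x = e j then 1/2 else -1/2) (h j) \<in> gS"
        using j(2) hK gS_subspace subspace_scale
        by (auto simp: br_scale_left br_h_e br_h_f cartan_diag scale_scale)
      then have "x \<in> {br a b | a b. a \<in> gS \<and> b \<in> gS}"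
        using j gK[OF j(1)] by blast
      then show ?case by (rule span_base)
    next
      case zero then show ?case by (rule span_zero)
    next
      case (add x y) then show ?case by (auto intro: span_add)
    next
      case (smult x a) then show ?case by (auto intro: span_scale)
    next
      case (bracket x y)
      then have "br x y \<in> {br a b | a b. a \<in> gS \<and> b \<in> gS}" unfolding gS_def by blast
      then show ?case by (rule span_base)
    qed
  qed
qed

lemma trace_u_gS: assumes y: "y \<in> gS" shows "trace_u y = 0"
proof -
  have "y \<in> span {br a b | a b. a \<in> gS \<and> b \<in> gS}" using gS_span_brackets y by blast
  then have "y \<in> pS \<and> trace_u y = 0"
  proof (induction rule: span_induct_alt)
    case base then show ?case using trace_u_zero pS_subspace subspace_0 by blast
  next
    case (step c x z)
    then obtain a b where ab: "x = br a b" "a \<in> gS" "b \<in> gS" by blast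
    have xP: "x \<in> pS" using ab pS_br gS_subset_pS by blast
    have "trace_u (sc c x + z) = c * trace_u x + trace_u z" by (rule trace_u_linear) (use xP step in auto)
    moreover have "sc c x + z \<in> pS" using xP step pS_subspace subspace_add subspace_scale by blast
    ultimately show ?case using trace_u_br ab step by simp
  qed
  then show ?thesis by blast
qed

lemma coord_mat_index: "r < dim_u \<Longrightarrow> m < dim_u \<Longrightarrow> coord_mat xs $$ (r,m) = u_coord (xs ! r) m"
  unfolding coord_mat_def by simp

lemma top_cochain_linear:
  assumes xs: "xs \<in> plists pS dim_u" and i: "i < dim_u" and u: "u \<in> pS" and v: "v \<in> pS"
  shows "top_cochain (xs[i := sc a u + v]) = a * top_cochain (xs[i := u]) + top_cochain (xs[i := v])"
  unfolding top_cochain_def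
  by (rule det_row_linear[OF coord_mat_carrier coord_mat_carrier coord_mat_carrier i])
     (use xs i u v in \<open>auto simp: coord_mat_index u_coord_linear plists_def\<close>)

lemma top_cochain_repeated_entry:
  assumes "i < j" "j < dim_u" "xs ! i = xs ! j"
  shows "top_cochain xs = 0"
  unfolding top_cochain_def
  by (rule det_identical_rows[OF coord_mat_carrier, of i j])
     (use assms in \<open>auto intro!: eq_vecI simp: coord_mat_index coord_mat_def\<close>)

lemma top_cochain_gS_entry:
  assumes "i < dim_u" "xs ! i \<in> gS"
  shows "top_cochain xs = 0"
  unfolding top_cochain_def
  by (rule det_row_zero[OF coord_mat_carrier assms(1)]) (use assms u_coord_gS in \<open>auto simp: coord_mat_index\<close>)

lemma top_cochain_invariant:
  assumes xs: "xs \<in> plists pS dim_u" and y: "y \<in> gS"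
  shows "(\<Sum>i<dim_u. top_cochain (xs[i := br y (xs ! i)])) = 0"
proof -
  have len: "length xs = dim_u" using xs plists_def by auto
  have xP: "xs ! r \<in> pS" if "r < dim_u" for r using plists_nth[OF xs that] .
  let ?M = "coord_mat xs"
  have "coord_mat (xs[i := br y (xs ! i)]) =
      mat dim_u dim_u (\<lambda>(r,m). if r = i then (\<Sum>l<dim_u. ?M $$ (i,l) * ad_coord y l m) else ?M $$ (r,m))"
    if i: "i < dim_u" for i
    by (rule eq_matI) (use i len xP in \<open>auto simp: coord_mat_index u_coord_br[OF y] coord_mat_def\<close>)
  then have "(\<Sum>i<dim_u. top_cochain (xs[i := br y (xs ! i)])) =
      (\<Sum>i<dim_u. det (mat dim_u dim_u (\<lambda>(r,m). if r = i then (\<Sum>l<dim_u. ?M $$ (i,l) * ad_coord y l m) else ?M $$ (r,m))))"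
    unfolding top_cochain_def by (intro sum.cong) auto
  also have "\<dots> = det ?M * trace_u y"
    unfolding trace_u_def by (rule sum_det_row_derivation[OF coord_mat_carrier])
  finally show ?thesis using trace_u_gS[OF y] by simp
qed

lemma top_cochain_rel_cochain: "rel_cochain sc br pS gS dim_u top_cochain"
  unfolding rel_cochain_def
  using top_cochain_linear top_cochain_repeated_entry top_cochain_gS_entry top_cochain_invariant
  by blast

lemma dim_u_pos: "0 < dim_u"
proof -
  obtain j where j: "j \<notin> S" using S_proper by blast
  have eU: "e j \<in> pos_weight_vectors" unfolding pos_weight_vectors_def pS_def using j ad_grading_e
    by (auto simp: grading_weight_def intro!: lie_gen.gen exI[of _ 1])
  have "e j \<noteq> 0"
  proof
    assume "e j = 0"
    then have "h j = 0" using br_e_f[of j] by simp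
    then have "0 \<in> range h" by (metis rangeI)
    then show False using independent_h dependent_zero by blast
  qed
  moreover have "e j \<in> span u_basis" using eU span_u_basis span_base by blast
  ultimately have "u_basis \<noteq> {}" by auto
  then show ?thesis unfolding dim_u_def using u_list finite_u_basis by (metis card_gt_0_iff distinct_card)
qed

lemma u_list_plists: "u_list \<in> plists pS dim_u"
  unfolding plists_def dim_u_def using u_list(2) u_basis(1) pos_weight_vectors_pS by auto

lemma top_cochain_u_list: "top_cochain u_list = 1"
proof -
  have "coord_mat u_list = 1\<^sub>m dim_u" by (rule eq_matI) (auto simp: coord_mat_index u_coord_u_list coord_mat_def)
  then show ?thesis unfolding top_cochain_def by simp
qed

lemma top_cochain_cocycle: "\<forall>xs\<in>plists pS (Suc dim_u). ce_diff br dim_u top_cochain xs = 0"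
proof
  fix xs assume xs: "xs \<in> plists pS (Suc dim_u)"
  obtain n0 where n0: "dim_u = Suc n0" using dim_u_pos not0_implies_Suc by blast
  have rc: "rel_cochain sc br pS gS (Suc n0) top_cochain" using top_cochain_rel_cochain n0 by simp
  show "ce_diff br dim_u top_cochain xs = 0" unfolding n0
  proof (rule alternating_vanishes_above_codim[OF pS_subspace gS_subset_pS finite_gS_basis gS_basis(2) span_gS_basis finite_u_basis])
    show "pS \<subseteq> span (gS_basis \<union> u_basis)" using pS_subset_span_pS_basis pS_basis_def by simp
    show "card u_basis < Suc (Suc n0)" using n0 u_list distinct_card unfolding dim_u_def by fastforce
    show "multilinear pS (Suc (Suc n0)) (ce_diff br (Suc n0) top_cochain)" by (rule pair.ce_diff_multilinear[OF rc])
    show "alternating pS (Suc (Suc n0)) (ce_diff br (Suc n0) top_cochain)" by (rule pair.ce_diff_alternating[OF rc])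
    show "\<forall>xs\<in>plists pS (Suc (Suc n0)). \<forall>p<Suc (Suc n0). xs ! p \<in> gS \<longrightarrow> ce_diff br (Suc n0) top_cochain xs = 0"
      using pair.ce_diff_vanishes[OF rc] by blast
    show "xs \<in> plists pS (Suc (Suc n0))" using xs n0 by simp
  qed
qed

lemma u_coord_br_u_list:
  assumes ij: "i < dim_u" "j < dim_u" and nz: "u_coord (br (u_list ! i) (u_list ! j)) l \<noteq> 0"
  shows "l \<noteq> i" "l \<noteq> j"
proof -
  define w where "w = br (u_list ! i) (u_list ! j)"
  have bi: "u_list ! i \<in> pos_weight_vectors" "u_list ! j \<in> pos_weight_vectors"
    using u_list_nth ij u_basis(1) by auto
  have w: "w \<in> span u_basis" unfolding w_def span_u_basis by (rule br_span_pos) (use bi span_base in auto)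
  have "ad_grading w = sc (of_nat (weight (u_list ! i) + weight (u_list ! j))) w"
    unfolding w_def ad_grading_br using weight[OF bi(1)] weight[OF bi(2)]
    by (simp add: br_scale_left br_scale_right scale_left_distrib)
  moreover have "representation u_basis w (u_list ! l) \<noteq> 0" using nz u_coord_span_u[OF w] w_def by simp
  ultimately have "of_nat (weight (u_list ! l)) = (of_nat (weight (u_list ! i) + weight (u_list ! j)) :: complex)"
    by (rule weight_eq_eigenvalue[OF w])
  then have "weight (u_list ! l) = weight (u_list ! i) + weight (u_list ! j)" by (simp only: of_nat_eq_iff)
  moreover have "1 \<le> weight (u_list ! i)" "1 \<le> weight (u_list ! j)" using weight bi by auto
  ultimately show "l \<noteq> i" "l \<noteq> j" by auto
qed

lemma ce_term_u_list:
  assumes m: "dim_u = Suc m" and rb: "rel_cochain sc br pS gS m b" and ij: "i < j" "j < Suc m"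
  shows "ce_term b u_list i j = 0"
proof -
  obtain m' where m': "m = Suc m'" using ij by (metis less_nat_zero_code not0_implies_Suc less_Suc_eq_0_disj)
  have len: "length u_list = Suc (Suc m')" using m m' dim_u_def by simp
  have us: "u_list \<in> plists pS (Suc (Suc m'))" using u_list_plists m m' by simp
  define w where "w = br (u_list ! i) (u_list ! j)"
  define rest where "rest = del2 i j u_list"
  have rest: "rest \<in> plists pS m'" unfolding rest_def using plists_del2[OF us] ij m' by auto
  have w: "w \<in> span u_basis"
    unfolding w_def span_u_basis using u_list_nth u_basis(1) ij m by (intro br_span_pos span_base) auto
  have wr: "w # rest \<in> plists pS (Suc m')"
    using rest w span_u_basis span_pos_weight_vectors_pS by (auto simp: plists_Cons)
  have lin0: "linear_slot pS (Suc m') b 0"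
    using pair.rel_cochain_multilinear[OF rb] m' by (simp add: multilinear_def)
  have "b (w # rest) = b ((w # rest)[0 := (\<Sum>l<dim_u. sc (u_coord w l) (u_list ! l))])"
    using u_list_expansion[OF w] by simp
  also have "\<dots> = (\<Sum>l<dim_u. u_coord w l * b ((w # rest)[0 := u_list ! l]))"
    by (rule linear_slot_sum[OF pS_subspace lin0 wr]) (use u_list_pS in auto)
  also have "\<dots> = 0"
  proof (rule sum.neutral, rule ballI)
    fix l assume l: "l \<in> {..<dim_u}"
    show "u_coord w l * b ((w # rest)[0 := u_list ! l]) = 0"
    proof (cases "u_coord w l = 0")
      case False
      have ij': "i < dim_u" "j < dim_u" using ij m by auto
      have lij: "l \<noteq> i" "l \<noteq> j" using u_coord_br_u_list[OF ij'] False unfolding w_def by auto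
      define pos where "pos = length (filter (\<lambda>k. k \<noteq> i \<and> k \<noteq> j) [0..<l])"
      have lN: "l < length u_list" using l len m m' by simp
      have pl: "pos < m'" using index_in_del2_less[of l i j u_list] lij lN rest
        unfolding pos_def rest_def plists_def by auto
      have rp: "rest ! pos = u_list ! l" unfolding rest_def pos_def by (rule nth_del2_index) (use lij lN in auto)
      have "b (u_list ! l # rest) = 0"
        by (rule alternating_eq_0[OF pair.rel_cochain_alternating[OF rb], of _ 0 "Suc pos"])
           (use rest u_list_pS l pl rp m' in \<open>auto simp: plists_Cons\<close>)
      then show ?thesis by simp
    qed simp
  qed
  finally show ?thesis unfolding ce_term_def w_def rest_def by simp
qed

lemma top_cochain_not_coboundary:
  assumes m: "dim_u = Suc m" and rb: "rel_cochain sc br pS gS m b"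
  shows "\<exists>xs\<in>plists pS dim_u. ce_diff br m b xs \<noteq> top_cochain xs"
proof -
  have "ce_diff br m b u_list = 0"
    unfolding ce_diff_index_pairs using ce_term_u_list[OF m rb]
    by (intro sum.neutral) (auto simp: index_pairs_def)
  then show ?thesis using u_list_plists top_cochain_u_list by force
qed

lemma rel_cohom_nonzero_dim_u: "rel_cohom_nonzero sc br pS gS dim_u"
  unfolding rel_cohom_nonzero_def
  using top_cochain_rel_cochain top_cochain_cocycle top_cochain_not_coboundary by blast

end

theorem proposition4p7:
  fixes A :: "'i::finite \<Rightarrow> 'i \<Rightarrow> int"
    and sc :: "complex \<Rightarrow> 'a::ab_group_add \<Rightarrow> 'a"
    and br :: "'a \<Rightarrow> 'a \<Rightarrow> 'a"
    and e f h :: "'i \<Rightarrow> 'a"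
    and S :: "'i set"
  assumes "finite_type_cartan A"
    and "chevalley_realization A sc br e f h"
    and "S \<noteq> UNIV"
  shows "\<exists>n>0. rel_cohom_nonzero sc br
            (lie_gen sc br (range e \<union> f ` S))
            (lie_gen sc br (e ` S \<union> f ` S)) n"
proof -
  have "lie_algebra sc br" using assms(2) unfolding chevalley_realization_def by blast
  then interpret parabolic_setting sc br A e f h S
    by (intro parabolic_setting.intro complex_lie_algebra.intro parabolic_setting_axioms.intro assms)
  show ?thesis using dim_u_pos rel_cohom_nonzero_dim_u unfolding pS_def gS_def by blast
qed

end
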